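(* Let $k\ge 1$ be an integer and let $A_k\in\mathbb{Z}^{(2k+1)\times(4k+2)}$ be the matrix defined below. Then for every $\mathbf{b}\in\mathbb{Z}^{2k+1}$ with $\mathcal{F}_{A_k}(\mathbf{b})\neq\emptyset$, the Graver fiber graph $G:=G_{A_k,\mathbf{b},\mathcal{G}(A_k)}$ satisfies $\lambda(G)=\delta(G)$, i.e. its edge-connectivity equals its minimal degree.
   Context: Let $I_k$ be the $k\times k$ identity matrix and $\mathbf{1}_k\in\mathbb{Z}^k$ the all-ones vector. Define $$A_k=\begin{pmatrix} I_k & I_k & 0 & 0 & -\mathbf{1}_k & \mathbf{0}\\ 0&0&I_k&I_k&\mathbf{0}&-\mathbf{1}_k\\ 0&0&0&0&1&1\end{pmatrix}\in\mathbb{Z}^{(2k+1)\times(4k+2)},$$ where the unlabeled $0$'s are zero blocks of the appropriate sizes (the last two columns are single columns). For $A\in\mathbb{Z}^{d\times n}$ and $\mathbf{b}\in\mathbb{Z}^d$, the fiber is $\mathcal{F}_A(\mathbf{b})=\{\mathbf{u}\in\mathbb{Z}_{\ge0}^n: A\mathbf{u}=\mathbf{b}\}$. For $\mathcal{M}\subset\mathbb{Z}^n$, the fiber graph $G_{A,\mathbf{b},\mathcal{M}}$ is the simple graph with vertex set $\mathcal{F}_A(\mathbf{b})$ in which distinct $\mathbf{u},\mathbf{v}$ are adjacent iff $\mathbf{u}-\mathbf{v}\in\mathcal{M}$ or $\mathbf{v}-\mathbf{u}\in\mathcal{M}$. The partial order $\sqsubseteq$ on $\mathbb{Z}^n$: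 $\mathbf{u}\sqsubseteq\mathbf{v}$ iff $u_iv_i\ge0$ and $|u_i|\le|v_i|$ for all $i$. The Graver basis $\mathcal{G}(A)$ is the set of $\sqsubseteq$-minimal elements of $(\ker(A)\cap\mathbb{Z}^n)\setminus\{\mathbf{0}\}$. For a finite graph $G$, $\delta(G)$ is the minimum vertex degree. $G$ is $\ell$-edge-connected if it has more than one vertex and $G$ minus any set of fewer than $\ell$ edges is connected; $\lambda(G)$ is the largest $\ell$ such that $G$ is $\ell$-edge-connected (with $\lambda=0$ for a one-vertex graph). *)

theory Defs
  imports Main
begin

text \<open>Integer vectors of length n are modelled as functions nat \<Rightarrow> int vanishing
  outside the index range {0..<n}; a d\<times>n integer matrix is a function
  nat \<Rightarrow> nat \<Rightarrow> int (row, column), only entries with row < d, column < n matter.\<close>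

definition Zvec :: "nat \<Rightarrow> (nat \<Rightarrow> int) set" where
  "Zvec n = {u. \<forall>i\<ge>n. u i = 0}"

definition mat_vec :: "(nat \<Rightarrow> nat \<Rightarrow> int) \<Rightarrow> nat \<Rightarrow> nat \<Rightarrow> (nat \<Rightarrow> int) \<Rightarrow> (nat \<Rightarrow> int)" where
  "mat_vec A d n u = (\<lambda>i. if i < d then (\<Sum>j<n. A i j * u j) else 0)"

definition Amat :: "nat \<Rightarrow> nat \<Rightarrow> nat \<Rightarrow> int" where
  "Amat k i j =
     (if j < k then (if i = j then 1 else 0)
      else if j < 2*k then (if i = j - k then 1 else 0)
      else if j < 3*k then (if i = k + (j - 2*k) then 1 else 0)
      else if j < 4*k then (if i = k + (j - 3*k) then 1 else 0)
      else if j = 4*k then (if i < k then -1 else if i = 2*k then 1 else 0)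
      else if j = 4*k + 1 then (if k \<le> i \<and> i < 2*k then -1 else if i = 2*k then 1 else 0)
      else 0)"

definition fiber :: "(nat \<Rightarrow> nat \<Rightarrow> int) \<Rightarrow> nat \<Rightarrow> nat \<Rightarrow> (nat \<Rightarrow> int) \<Rightarrow> (nat \<Rightarrow> int) set" where
  "fiber A d n b = {u \<in> Zvec n. (\<forall>i<n. 0 \<le> u i) \<and> mat_vec A d n u = b}"

definition conformal :: "(nat \<Rightarrow> int) \<Rightarrow> (nat \<Rightarrow> int) \<Rightarrow> bool" where
  "conformal u v \<longleftrightarrow> (\<forall>i. 0 \<le> u i * v i \<and> \<bar>u i\<bar> \<le> \<bar>v i\<bar>)"

definition int_kernel :: "(nat \<Rightarrow> nat \<Rightarrow> int) \<Rightarrow> nat \<Rightarrow> nat \<Rightarrow> (nat \<Rightarrow> int) set" where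
  "int_kernel A d n = {u \<in> Zvec n. mat_vec A d n u = (\<lambda>_. 0)}"

definition graver :: "(nat \<Rightarrow> nat \<Rightarrow> int) \<Rightarrow> nat \<Rightarrow> nat \<Rightarrow> (nat \<Rightarrow> int) set" where
  "graver A d n = {g \<in> int_kernel A d n - {\<lambda>_. 0}.
      \<forall>u \<in> int_kernel A d n - {\<lambda>_. 0}. conformal u g \<longrightarrow> u = g}"

text \<open>Simple graphs: vertex set V, edge set E of 2-element subsets of V.\<close>

definition fiber_edges :: "(nat \<Rightarrow> nat \<Rightarrow> int) \<Rightarrow> nat \<Rightarrow> nat \<Rightarrow> (nat \<Rightarrow> int) \<Rightarrow> (nat \<Rightarrow> int) set
    \<Rightarrow> (nat \<Rightarrow> int) set set" where
  "fiber_edges A d n b M = {{u, v} | u v. u \<in> fiber A d n b \<and> v \<in> fiber A d n b \<and> u \<noteq> v \<and>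
      ((\<lambda>i. u i - v i) \<in> M \<or> (\<lambda>i. v i - u i) \<in> M)}"

definition graph_connected :: "'a set \<Rightarrow> 'a set set \<Rightarrow> bool" where
  "graph_connected V E \<longleftrightarrow> (\<forall>u\<in>V. \<forall>v\<in>V. (\<lambda>x y. {x, y} \<in> E)\<^sup>*\<^sup>* u v)"

definition edge_connected :: "'a set \<Rightarrow> 'a set set \<Rightarrow> nat \<Rightarrow> bool" where
  "edge_connected V E l \<longleftrightarrow> 1 < card V \<and>
     (\<forall>F. F \<subseteq> E \<and> finite F \<and> card F < l \<longrightarrow> graph_connected V (E - F))"

definition edge_connectivity :: "'a set \<Rightarrow> 'a set set \<Rightarrow> nat" where
  "edge_connectivity V E = (if 1 < card V then (GREATEST l. edge_connected V E l) else 0)"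

definition degree :: "'a set set \<Rightarrow> 'a \<Rightarrow> nat" where
  "degree E v = card {e \<in> E. v \<in> e}"

definition min_degree :: "'a set \<Rightarrow> 'a set set \<Rightarrow> nat" where
  "min_degree V E = Min (degree E ` V)"

end

theory Submission
  imports Defs "HOL-Library.Function_Algebras"
begin

text \<open>
  The Graver basis of \<open>A\<^sub>k\<close> consists of the swaps, which move one unit between the two
  columns of a row, and the lifts \<open>\<plusminus>lift C\<close>, which moreover change the entry of column \<open>4k\<close>,
  the level of a fiber vector, by one. Edge connectivity never exceeds the minimum degree \<open>\<delta>\<close>, so it
  suffices that fewer than \<open>\<delta>\<close> edges never separate a vertex from a fixed vertex of the top level.
  This goes by induction on the distance to the top: from a vertex strictly between the lowest
  and the highest level, \<open>2\<^sup>k + 2k\<close> edge-disjoint walks lead one level up, and from the lowest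
  level one walk through each neighbour does. Within the top level, a swap edge \<open>{u, v}\<close> is
  backed up by a square through every other swappable row and, if the fiber extends below, by
  \<open>2\<^sup>k\<close> walks through the level beneath. A top vertex with vanishing first columns has no more
  neighbours than either the first or the last family has walks, and the second family has one
  walk per neighbour; so every family has at least \<open>\<delta>\<close> walks.
\<close>

section \<open>Edge-disjoint walks and edge connectivity\<close>

fun walk_edges :: "'a list \<Rightarrow> 'a set set" where
  "walk_edges (x # y # xs) = insert {x, y} (walk_edges (y # xs))"
| "walk_edges _ = {}"

lemma walk_edges_subset_set: "e \<in> walk_edges xs \<Longrightarrow> e \<subseteq> set xs"
  by (induction xs rule: walk_edges.induct) auto

lemma walk_edges_disjointI:
  assumes "\<And>e. e \<in> walk_edges xs \<Longrightarrow> \<exists>x\<in>e. P x" and "\<And>y. y \<in> set ys \<Longrightarrow> \<not> P y"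
  shows "walk_edges xs \<inter> walk_edges ys = {}"
  using assms walk_edges_subset_set by blast

lemma rtranclp_walk:
  "walk_edges xs \<subseteq> E \<Longrightarrow> xs \<noteq> [] \<Longrightarrow> (\<lambda>x y. {x, y} \<in> E)\<^sup>*\<^sup>* (hd xs) (last xs)"
proof (induction xs rule: walk_edges.induct)
  case (1 x y xs)
  then show ?case by (auto intro: converse_rtranclp_into_rtranclp)
qed auto

definition edge_linked :: "'a set set \<Rightarrow> nat \<Rightarrow> 'a \<Rightarrow> 'a \<Rightarrow> bool" where
  "edge_linked E d u v \<longleftrightarrow>
     (\<forall>F. F \<subseteq> E \<longrightarrow> finite F \<longrightarrow> card F < d \<longrightarrow> (\<lambda>x y. {x, y} \<in> E - F)\<^sup>*\<^sup>* u v)"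

lemma edge_linked_refl: "edge_linked E d u u"
  by (simp add: edge_linked_def)

lemma rtranclp_edge_sym:
  assumes "(\<lambda>x y. {x, y} \<in> E)\<^sup>*\<^sup>* u v"
  shows "(\<lambda>x y. {x, y} \<in> E)\<^sup>*\<^sup>* v u"
proof -
  have "((\<lambda>x y. {x, y} \<in> E)\<inverse>\<inverse>)\<^sup>*\<^sup>* v u"
    using assms by (simp add: rtranclp_conversep)
  moreover have "(\<lambda>x y. {x, y} \<in> E)\<inverse>\<inverse> = (\<lambda>x y. {x, y} \<in> E)"
    by (auto simp: fun_eq_iff insert_commute)
  ultimately show ?thesis by simp
qed

lemma edge_linked_sym: "edge_linked E d u v \<Longrightarrow> edge_linked E d v u"
  unfolding edge_linked_def using rtranclp_edge_sym by metis

lemma edge_linked_trans: "edge_linked E d u v \<Longrightarrow> edge_linked E d v w \<Longrightarrow> edge_linked E d u w"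
  unfolding edge_linked_def by (meson rtranclp_trans)

text \<open>Menger's theorem, easy direction: \<open>d\<close> edge-disjoint walks from \<open>u\<close> cannot all be
  cut by fewer than \<open>d\<close> edges.\<close>
lemma edge_linked_by_disjoint_walks:
  assumes "finite W" "d \<le> card W"
    and walks: "\<And>p. p \<in> W \<Longrightarrow> p \<noteq> [] \<and> hd p = u \<and> walk_edges p \<subseteq> E \<and> edge_linked E d (last p) v"
    and disj: "\<And>p q. p \<in> W \<Longrightarrow> q \<in> W \<Longrightarrow> p \<noteq> q \<Longrightarrow> walk_edges p \<inter> walk_edges q = {}"
  shows "edge_linked E d u v"
  unfolding edge_linked_def
proof (intro allI impI)
  fix F assume F: "F \<subseteq> E" "finite F" "card F < d"
  define cut where "cut = {p \<in> W. walk_edges p \<inter> F \<noteq> {}}"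
  define hit where "hit p = (SOME e. e \<in> walk_edges p \<inter> F)" for p
  have hit: "hit p \<in> walk_edges p \<inter> F" if "p \<in> cut" for p
    unfolding hit_def by (rule someI_ex) (use that in \<open>auto simp: cut_def\<close>)
  have "inj_on hit cut"
  proof (rule inj_onI)
    fix p q assume pq: "p \<in> cut" "q \<in> cut" "hit p = hit q"
    then have "walk_edges p \<inter> walk_edges q \<noteq> {}" using hit[OF pq(1)] hit[OF pq(2)] by auto
    then show "p = q" using disj pq(1,2) unfolding cut_def by blast
  qed
  moreover have "hit ` cut \<subseteq> F" using hit by auto
  ultimately have "card cut \<le> card F"
    using F(2) by (intro card_inj_on_le)
  then have "card cut < card W" using F(3) assms(2) by linarith
  then have "cut \<noteq> W" by blast
  then obtain p where p: "p \<in> W" "walk_edges p \<inter> F = {}" unfolding cut_def by auto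
  note P = walks[OF p(1)]
  have "walk_edges p \<subseteq> E - F" using P p(2) by blast
  then have "(\<lambda>x y. {x, y} \<in> E - F)\<^sup>*\<^sup>* u (last p)"
    using rtranclp_walk[of p "E - F"] P by simp
  moreover have "(\<lambda>x y. {x, y} \<in> E - F)\<^sup>*\<^sup>* (last p) v"
    using P F unfolding edge_linked_def by simp
  ultimately show "(\<lambda>x y. {x, y} \<in> E - F)\<^sup>*\<^sup>* u v"
    by (rule rtranclp_trans)
qed

lemma degree_eq_card_neighbours:
  assumes "\<And>e. e \<in> E \<Longrightarrow> \<exists>x y. e = {x, y} \<and> x \<noteq> y"
  shows "degree E u = card {v. {u, v} \<in> E}"
proof -
  have "{e \<in> E. u \<in> e} \<subseteq> (\<lambda>v. {u, v}) ` {v. {u, v} \<in> E}"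
  proof
    fix e assume e: "e \<in> {e \<in> E. u \<in> e}"
    then obtain x y where "e = {x, y}" using assms by blast
    then obtain v where "e = {u, v}" using e by auto
    then show "e \<in> (\<lambda>v. {u, v}) ` {v. {u, v} \<in> E}" using e by auto
  qed
  then have "{e \<in> E. u \<in> e} = (\<lambda>v. {u, v}) ` {v. {u, v} \<in> E}" by auto
  moreover have "inj_on (\<lambda>v. {u, v}) {v. {u, v} \<in> E}"
    by (rule inj_onI) (auto simp: doubleton_eq_iff)
  ultimately show ?thesis unfolding degree_def by (simp add: card_image)
qed

text \<open>Deleting the edges at \<open>v\<close> isolates it.\<close>
lemma edge_connected_le_degree:
  assumes "edge_connected V E l" "finite E" "v \<in> V"
  shows "l \<le> degree E v"
proof (rule ccontr)
  assume "\<not> l \<le> degree E v"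
  define F where "F = {e \<in> E. v \<in> e}"
  have "F \<subseteq> E" "finite F" "card F < l"
    using assms(2) \<open>\<not> l \<le> degree E v\<close> unfolding F_def degree_def by auto
  then have conn: "graph_connected V (E - F)" using assms(1) unfolding edge_connected_def by simp
  have "\<not> V \<subseteq> {v}" using assms(1) card_mono[of "{v}" V] unfolding edge_connected_def by auto
  then obtain w where "w \<in> V" "w \<noteq> v" by auto
  then have "(\<lambda>x y. {x, y} \<in> E - F)\<^sup>*\<^sup>* v w" using conn assms(3) unfolding graph_connected_def by simp
  then show False
    using \<open>w \<noteq> v\<close> by (cases rule: converse_rtranclpE) (auto simp: F_def)
qed

lemma edge_connectivity_eq_min_degreeI:
  assumes fin: "finite V" and "V \<noteq> {}"
    and edges: "\<And>e. e \<in> E \<Longrightarrow> \<exists>x y. e = {x, y} \<and> x \<noteq> y \<and> x \<in> V \<and> y \<in> V"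
    and linked: "\<And>u v. u \<in> V \<Longrightarrow> v \<in> V \<Longrightarrow> edge_linked E (min_degree V E) u v"
  shows "edge_connectivity V E = min_degree V E"
proof (cases "1 < card V")
  case False
  moreover have "card V > 0" using assms(1,2) by (simp add: card_gt_0_iff)
  ultimately have "card V = 1" by linarith
  then obtain v where V: "V = {v}" by (auto simp: card_1_singleton_iff)
  have "E = {}"
  proof (rule ccontr)
    assume "E \<noteq> {}"
    then obtain x y where "x \<noteq> y" "x \<in> V" "y \<in> V" using edges by blast
    then show False using V by simp
  qed
  then show ?thesis using False V by (simp add: edge_connectivity_def min_degree_def degree_def)
next
  case True
  have "E \<subseteq> Pow V" using edges by blast
  then have "finite E" using fin by (meson finite_Pow_iff finite_subset)
  have "min_degree V E \<in> degree E ` V" unfolding min_degree_def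
    using fin assms(2) by (intro Min_in) auto
  then obtain v where v: "v \<in> V" "degree E v = min_degree V E" by auto
  have "edge_connected V E (min_degree V E)"
    using True linked unfolding edge_connected_def graph_connected_def edge_linked_def by simp
  moreover have "l \<le> min_degree V E" if "edge_connected V E l" for l
    using edge_connected_le_degree[OF that \<open>finite E\<close> v(1)] v(2) by simp
  ultimately have "(GREATEST l. edge_connected V E l) = min_degree V E"
    by (intro Greatest_equality)
  then show ?thesis using True unfolding edge_connectivity_def by simp
qed

section \<open>Fibers and Graver bases\<close>

lemma mat_vec_add: "mat_vec A d n (u + v) = mat_vec A d n u + mat_vec A d n v"
  by (simp add: mat_vec_def fun_eq_iff distrib_left sum.distrib)

lemma mat_vec_uminus: "mat_vec A d n (- u) = - mat_vec A d n u"
  by (simp add: mat_vec_def fun_eq_iff sum_negf)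

lemma int_kernel_uminus: "g \<in> int_kernel A d n \<Longrightarrow> - g \<in> int_kernel A d n"
  by (simp add: int_kernel_def Zvec_def mat_vec_uminus zero_fun_def[symmetric])

lemma graver_iff:
  "g \<in> graver A d n \<longleftrightarrow>
     g \<in> int_kernel A d n \<and> g \<noteq> 0 \<and> (\<forall>u\<in>int_kernel A d n. u \<noteq> 0 \<longrightarrow> conformal u g \<longrightarrow> u = g)"
  unfolding graver_def zero_fun_def by blast

lemma graver_uminus:
  assumes "g \<in> graver A d n" shows "- g \<in> graver A d n"
proof -
  have "u = - g" if "u \<in> int_kernel A d n" "u \<noteq> 0" "conformal u (- g)" for u
  proof -
    have "- u \<in> int_kernel A d n - {0}" "conformal (- u) g"
      using that int_kernel_uminus[of u] by (auto simp: conformal_def)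
    then have "- u = g" using assms unfolding graver_def zero_fun_def by blast
    then show ?thesis by (metis minus_minus)
  qed
  then show ?thesis
    using assms int_kernel_uminus[of g] unfolding graver_def zero_fun_def[symmetric] by auto
qed

lemma conformal_unit_entry:
  assumes "conformal u v" "\<bar>v i\<bar> \<le> 1" shows "u i = 0 \<or> u i = v i"
proof -
  have "0 \<le> u i * v i" "\<bar>u i\<bar> \<le> \<bar>v i\<bar>" using assms(1) unfolding conformal_def by auto
  with assms(2) show ?thesis
    by (cases "v i = 0"; cases "v i = 1"; cases "v i = -1") (auto simp: abs_le_iff mult_le_0_iff zero_le_mult_iff)
qed

lemma fiber_add_kernel:
  assumes "u \<in> fiber A d n b" "g \<in> int_kernel A d n" "\<forall>j<n. 0 \<le> u j + g j"
  shows "u + g \<in> fiber A d n b"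
  using assms by (simp add: fiber_def int_kernel_def Zvec_def mat_vec_add zero_fun_def)

lemma fiber_diff_kernel:
  assumes "u \<in> fiber A d n b" "g \<in> int_kernel A d n" "\<forall>j<n. 0 \<le> u j - g j"
  shows "u - g \<in> fiber A d n b"
proof -
  have "u - g = u + - g" by (simp add: fun_eq_iff)
  then show ?thesis using fiber_add_kernel[OF assms(1) int_kernel_uminus[OF assms(2)]] assms(3) by simp
qed

lemma fiber_edges_graver_iff:
  "{u, v} \<in> fiber_edges A d n b (graver A d n) \<longleftrightarrow>
     u \<in> fiber A d n b \<and> v \<in> fiber A d n b \<and> v - u \<in> graver A d n"
    (is "?edge \<longleftrightarrow> ?rhs")
proof
  assume ?edge
  then obtain x y where xy: "{u, v} = {x, y}" "x \<in> fiber A d n b" "y \<in> fiber A d n b"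
    "x - y \<in> graver A d n \<or> y - x \<in> graver A d n"
    unfolding fiber_edges_def fun_diff_def by blast
  then have "x - y \<in> graver A d n" "y - x \<in> graver A d n"
    using graver_uminus[of "x - y"] graver_uminus[of "y - x"] by auto
  with xy(1-3) show ?rhs by (auto simp: doubleton_eq_iff)
next
  assume rhs: ?rhs
  moreover have "0 \<notin> graver A d n" by (simp add: graver_def zero_fun_def)
  ultimately have "u \<noteq> v" by auto
  with rhs show ?edge
    unfolding fiber_edges_def fun_diff_def by blast
qed

lemma fiber_edges_doubleton:
  "e \<in> fiber_edges A d n b M \<Longrightarrow> \<exists>x y. e = {x, y} \<and> x \<noteq> y \<and> x \<in> fiber A d n b \<and> y \<in> fiber A d n b"
  unfolding fiber_edges_def by auto

lemma finite_bounded_Zvec: "finite {u \<in> Zvec n. \<forall>j<n. 0 \<le> u j \<and> u j \<le> B}"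
proof -
  let ?S = "{u \<in> Zvec n. \<forall>j<n. 0 \<le> u j \<and> u j \<le> B}"
  define as_list where "as_list u = map u [0..<n]" for u :: "nat \<Rightarrow> int"
  have "inj_on as_list ?S"
  proof (rule inj_onI)
    fix u v assume uv: "u \<in> ?S" "v \<in> ?S" "as_list u = as_list v"
    show "u = v"
    proof
      fix j show "u j = v j"
      proof (cases "j < n")
        case True
        then have "as_list u ! j = u j" "as_list v ! j = v j"
          unfolding as_list_def by (simp_all del: upt_Suc)
        then show ?thesis using uv(3) by metis
      next
        case False
        then show ?thesis using uv(1,2) unfolding Zvec_def by simp
      qed
    qed
  qed
  moreover have "as_list ` ?S \<subseteq> {xs. set xs \<subseteq> {0..B} \<and> length xs = n}"
    unfolding as_list_def by (auto simp del: upt_Suc)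
  moreover have "finite {xs. set xs \<subseteq> {0..B} \<and> length xs = n}"
    by (rule finite_lists_length_eq) simp
  ultimately show ?thesis by (meson finite_imageD finite_subset)
qed

section \<open>The matrix \<open>A\<^sub>k\<close> and its Graver basis\<close>

locale Amat_cols =
  fixes k :: nat
begin

abbreviation Ker :: "(nat \<Rightarrow> int) set" where "Ker \<equiv> int_kernel (Amat k) (2*k+1) (4*k+2)"
abbreviation Gr :: "(nat \<Rightarrow> int) set" where "Gr \<equiv> graver (Amat k) (2*k+1) (4*k+2)"

text \<open>Row \<open>q < 2k\<close> of \<open>A\<^sub>k\<close> has its two identity entries in the columns \<open>col q\<close> and
  \<open>col q + k\<close>; its third entry lies in column \<open>4k\<close> (if \<open>q < k\<close>) or \<open>4k + 1\<close> (otherwise).\<close>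
definition col :: "nat \<Rightarrow> nat" where "col q = (if q < k then q else k + q)"

definition pair_sign :: "nat \<Rightarrow> int" where "pair_sign q = (if q < k then 1 else -1)"

lemma pair_sign_simps [simp]: "q < k \<Longrightarrow> pair_sign q = 1" "\<not> q < k \<Longrightarrow> pair_sign q = -1"
  by (simp_all add: pair_sign_def)

lemma col_bounds [simp]:
  "q < 2*k \<Longrightarrow> col q < 4*k" "q < 2*k \<Longrightarrow> col q + k < 4*k"
  "q < 2*k \<Longrightarrow> col q \<noteq> 4*k" "q < 2*k \<Longrightarrow> col q \<noteq> Suc (4*k)"
  "q < 2*k \<Longrightarrow> col q + k \<noteq> 4*k" "q < 2*k \<Longrightarrow> col q + k \<noteq> Suc (4*k)"
  unfolding col_def by auto

lemma col_inject [simp]: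
  "p < 2*k \<Longrightarrow> q < 2*k \<Longrightarrow> col p = col q \<longleftrightarrow> p = q"
  "p < 2*k \<Longrightarrow> q < 2*k \<Longrightarrow> col p + k = col q + k \<longleftrightarrow> p = q"
  "p < 2*k \<Longrightarrow> q < 2*k \<Longrightarrow> col p \<noteq> col q + k"
  "p < 2*k \<Longrightarrow> q < 2*k \<Longrightarrow> col q + k \<noteq> col p"
  unfolding col_def by auto

lemma col_surj: "j < 4*k \<Longrightarrow> \<exists>q<2*k. j = col q \<or> j = col q + k"
proof -
  assume j: "j < 4*k"
  consider "j < k" | "k \<le> j" "j < 2*k" | "2*k \<le> j" "j < 3*k" | "3*k \<le> j" by linarith
  then show ?thesis
  proof cases
    case 1 then show ?thesis by (intro exI[of _ j]) (auto simp: col_def)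
  next
    case 2 then show ?thesis by (intro exI[of _ "j - k"]) (auto simp: col_def)
  next
    case 3 then show ?thesis by (intro exI[of _ "j - k"]) (auto simp: col_def)
  next
    case 4 then show ?thesis using j by (intro exI[of _ "j - 2*k"]) (auto simp: col_def)
  qed
qed

lemma coord_cases:
  assumes "\<And>q. q < 2*k \<Longrightarrow> P (col q)" "\<And>q. q < 2*k \<Longrightarrow> P (col q + k)"
    "P (4*k)" "P (Suc (4*k))" "\<And>j. 4*k+2 \<le> j \<Longrightarrow> P j"
  shows "P j"
proof -
  consider "j < 4*k" | "j = 4*k" | "j = Suc (4*k)" | "4*k+2 \<le> j" by linarith
  then show "P j"
  proof cases
    case 1 then show ?thesis using col_surj assms by blast
  qed (use assms in auto)
qed

lemma all_coordsI:
  assumes "\<And>q. q < 2*k \<Longrightarrow> P (col q)" "\<And>q. q < 2*k \<Longrightarrow> P (col q + k)" "P (4*k)" "P (Suc (4*k))"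
  shows "\<forall>j<4*k+2. P j"
  using coord_cases[of "\<lambda>j. j < 4*k+2 \<longrightarrow> P j"] assms by auto

lemma Amat_vec_eqI:
  assumes "\<And>q. q < 2*k \<Longrightarrow> f (col q) = g (col q)" "\<And>q. q < 2*k \<Longrightarrow> f (col q + k) = g (col q + k)"
    "f (4*k) = g (4*k)" "f (Suc (4*k)) = g (Suc (4*k))" "\<And>j. 4*k+2 \<le> j \<Longrightarrow> f j = g j"
  shows "f = g"
  using coord_cases[of "\<lambda>j. f j = g j"] assms by auto

lemma Amat_upper_row:
  assumes "q < k"
  shows "(\<Sum>j<4*k+2. Amat k q j * u j) = u q + u (k + q) - u (4*k)"
proof -
  have "(\<Sum>j<4*k+2. Amat k q j * u j) = (\<Sum>j<4*k+2. (if j = q then u j else 0)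
      + (if j = k + q then u j else 0) - (if j = 4*k then u j else 0))"
    by (rule sum.cong) (use assms in \<open>auto simp: Amat_def\<close>)
  also have "\<dots> = u q + u (k + q) - u (4*k)"
    using assms by (simp add: sum.distrib sum_subtractf)
  finally show ?thesis .
qed

lemma Amat_lower_row:
  assumes "k \<le> q" "q < 2*k"
  shows "(\<Sum>j<4*k+2. Amat k q j * u j) = u (k + q) + u (2*k + q) - u (Suc (4*k))"
proof -
  have "(\<Sum>j<4*k+2. Amat k q j * u j) = (\<Sum>j<4*k+2. (if j = k + q then u j else 0)
      + (if j = 2*k + q then u j else 0) - (if j = Suc (4*k) then u j else 0))"
    by (rule sum.cong) (use assms in \<open>auto simp: Amat_def\<close>)
  also have "\<dots> = u (k + q) + u (2*k + q) - u (Suc (4*k))"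
    using assms by (simp add: sum.distrib sum_subtractf)
  finally show ?thesis .
qed

lemma Amat_row:
  assumes "q < 2*k"
  shows "(\<Sum>j<4*k+2. Amat k q j * u j) = u (col q) + u (col q + k) - u (if q < k then 4*k else Suc (4*k))"
proof (cases "q < k")
  case True
  then have e: "col q + k = k + q" "col q = q" "(if q < k then 4*k else Suc (4*k)) = 4*k"
    by (auto simp: col_def)
  show ?thesis unfolding e(1) unfolding e(2,3) by (rule Amat_upper_row[OF True])
next
  case False
  then have e: "col q + k = 2*k + q" "col q = k + q" "(if q < k then 4*k else Suc (4*k)) = Suc (4*k)"
    by (auto simp: col_def)
  show ?thesis unfolding e(1) unfolding e(2,3) by (rule Amat_lower_row) (use False assms in auto)
qed

lemma Amat_last_row: "(\<Sum>j<4*k+2. Amat k (2*k) j * u j) = u (4*k) + u (Suc (4*k))"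
proof -
  have "(\<Sum>j<4*k+2. Amat k (2*k) j * u j)
      = (\<Sum>j<4*k+2. (if j = 4*k then u j else 0) + (if j = Suc (4*k) then u j else 0))"
    by (rule sum.cong) (auto simp: Amat_def)
  then show ?thesis by (simp add: sum.distrib)
qed

lemma mat_vec_Amat_eq_iff:
  "mat_vec (Amat k) (2*k+1) (4*k+2) u = c \<longleftrightarrow>
     (\<forall>q<2*k. u (col q) + u (col q + k) - u (if q < k then 4*k else Suc (4*k)) = c q) \<and>
     u (4*k) + u (Suc (4*k)) = c (2*k) \<and> (\<forall>i\<ge>2*k+1. c i = 0)"
proof
  assume "mat_vec (Amat k) (2*k+1) (4*k+2) u = c"
  then have "c i = (if i < 2*k+1 then (\<Sum>j<4*k+2. Amat k i j * u j) else 0)" for i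
    unfolding mat_vec_def by auto
  then show "(\<forall>q<2*k. u (col q) + u (col q + k) - u (if q < k then 4*k else Suc (4*k)) = c q) \<and>
     u (4*k) + u (Suc (4*k)) = c (2*k) \<and> (\<forall>i\<ge>2*k+1. c i = 0)"
    using Amat_row Amat_last_row[of u] by auto
next
  assume A: "(\<forall>q<2*k. u (col q) + u (col q + k) - u (if q < k then 4*k else Suc (4*k)) = c q) \<and>
     u (4*k) + u (Suc (4*k)) = c (2*k) \<and> (\<forall>i\<ge>2*k+1. c i = 0)"
  show "mat_vec (Amat k) (2*k+1) (4*k+2) u = c"
  proof
    fix i
    consider "i < 2*k" | "i = 2*k" | "i \<ge> 2*k+1" by linarith
    then show "mat_vec (Amat k) (2*k+1) (4*k+2) u i = c i"
      unfolding mat_vec_def using A Amat_row[of i u] Amat_last_row[of u] by cases auto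
  qed
qed

lemma int_kernel_Amat_iff:
  "g \<in> Ker \<longleftrightarrow> g \<in> Zvec (4*k+2) \<and> g (Suc (4*k)) = - g (4*k) \<and>
     (\<forall>q<2*k. g (col q) + g (col q + k) = pair_sign q * g (4*k))"
  unfolding int_kernel_def mat_vec_Amat_eq_iff by (auto simp: pair_sign_def algebra_simps)

definition swap :: "nat \<Rightarrow> int \<Rightarrow> nat \<Rightarrow> int" where
  "swap p \<sigma> = (\<lambda>j. if j = col p then \<sigma> else if j = col p + k then - \<sigma> else 0)"

text \<open>\<open>lift C\<close> raises coordinate \<open>4k\<close> by one; in each row \<open>q\<close> it changes one of the columns
  \<open>col q\<close>, \<open>col q + k\<close> by \<open>pair_sign q\<close>, namely the first one iff \<open>q \<in> C\<close>.\<close>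
definition lift :: "nat set \<Rightarrow> nat \<Rightarrow> int" where
  "lift C = (\<lambda>j. if j < k then of_bool (j \<in> C) else if j < 2*k then of_bool (j - k \<notin> C)
     else if j < 3*k then - of_bool (j - k \<in> C) else if j < 4*k then - of_bool (j - 2*k \<notin> C)
     else if j = 4*k then 1 else if j = Suc (4*k) then -1 else 0)"

lemma swap_apply [simp]:
  "p < 2*k \<Longrightarrow> q < 2*k \<Longrightarrow> swap p \<sigma> (col q) = (if q = p then \<sigma> else 0)"
  "p < 2*k \<Longrightarrow> q < 2*k \<Longrightarrow> swap p \<sigma> (col q + k) = (if q = p then - \<sigma> else 0)"
  "p < 2*k \<Longrightarrow> swap p \<sigma> (4*k) = 0" "p < 2*k \<Longrightarrow> swap p \<sigma> (Suc (4*k)) = 0"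
  "p < 2*k \<Longrightarrow> 4*k+2 \<le> j \<Longrightarrow> swap p \<sigma> j = 0"
  unfolding swap_def col_def by auto

lemma lift_apply [simp]:
  "q < 2*k \<Longrightarrow> lift C (col q) = pair_sign q * of_bool (q \<in> C)"
  "q < 2*k \<Longrightarrow> lift C (col q + k) = pair_sign q * of_bool (q \<notin> C)"
  "lift C (4*k) = 1" "lift C (Suc (4*k)) = -1" "4*k+2 \<le> j \<Longrightarrow> lift C j = 0"
  unfolding lift_def col_def pair_sign_def by auto

lemma swap_in_int_kernel: "p < 2*k \<Longrightarrow> swap p \<sigma> \<in> Ker"
  unfolding int_kernel_Amat_iff Zvec_def by auto

lemma lift_in_int_kernel: "lift C \<in> Ker"
  unfolding int_kernel_Amat_iff Zvec_def by (auto simp: pair_sign_def)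

lemma int_kernel_vanishes: "g \<in> Ker \<Longrightarrow> 4*k+2 \<le> j \<Longrightarrow> g j = 0"
  unfolding int_kernel_Amat_iff Zvec_def by auto

lemma swap_in_graver:
  assumes p: "p < 2*k" and \<sigma>: "\<sigma> = 1 \<or> \<sigma> = -1"
  shows "swap p \<sigma> \<in> Gr"
proof -
  have "swap p \<sigma> (col p) \<noteq> 0" using p \<sigma> by auto
  then have "swap p \<sigma> \<noteq> 0" by (metis zero_fun_apply)
  moreover have "u = swap p \<sigma>" if u: "u \<in> Ker" "u \<noteq> 0" "conformal u (swap p \<sigma>)" for u
  proof -
    have unit: "\<bar>swap p \<sigma> i\<bar> \<le> 1" for i using \<sigma> unfolding swap_def by auto
    have zero: "u i = 0" if "swap p \<sigma> i = 0" for i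
      using conformal_unit_entry[OF u(3) unit, of i] that by auto
    have u_level: "u (4*k) = 0" "u (Suc (4*k)) = 0" using zero p by auto
    have u_other: "u (col q) = 0" "u (col q + k) = 0" if "q < 2*k" "q \<noteq> p" for q
      using zero p that by auto
    have u_pair: "u (col p) + u (col p + k) = 0" using u(1) u_level p unfolding int_kernel_Amat_iff by auto
    have "u (col p) \<noteq> 0"
    proof
      assume "u (col p) = 0"
      then have "u = 0"
        by (intro Amat_vec_eqI) (use u_pair u_other u_level int_kernel_vanishes[OF u(1)] in auto)
      then show False using u(2) by simp
    qed
    then have "u (col p) = \<sigma>" using conformal_unit_entry[OF u(3) unit, of "col p"] p by simp
    then show "u = swap p \<sigma>"
      by (intro Amat_vec_eqI) (use u_pair u_other u_level int_kernel_vanishes[OF u(1)] p in auto)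
  qed
  ultimately show ?thesis unfolding graver_iff using swap_in_int_kernel[OF p] by blast
qed

lemma lift_in_graver: "lift C \<in> Gr"
proof -
  have "lift C \<noteq> 0" by (metis lift_apply(3) zero_fun_apply zero_neq_one)
  moreover have "u = lift C" if u: "u \<in> Ker" "u \<noteq> 0" "conformal u (lift C)" for u
  proof -
    have unit: "\<bar>lift C i\<bar> \<le> 1" for i unfolding lift_def by auto
    have entry: "u i = 0 \<or> u i = lift C i" for i using conformal_unit_entry[OF u(3) unit] .
    have ker: "u (Suc (4*k)) = - u (4*k)" "\<And>q. q < 2*k \<Longrightarrow> u (col q) + u (col q + k) = pair_sign q * u (4*k)"
      using u(1) unfolding int_kernel_Amat_iff by auto
    have sign: "pair_sign q \<noteq> 0" for q by (simp add: pair_sign_def)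
    have pairs: "u (col q) = s * lift C (col q) \<and> u (col q + k) = s * lift C (col q + k)"
      if "q < 2*k" "u (4*k) = s" "s = 0 \<or> s = 1" for q s
      using ker(2)[OF that(1)] entry[of "col q"] entry[of "col q + k"] that sign[of q]
      by (cases "q \<in> C") auto
    consider "u (4*k) = 0" | "u (4*k) = 1" using entry[of "4*k"] by auto
    then show ?thesis
    proof cases
      case 1
      then have "u = 0"
        by (intro Amat_vec_eqI) (use pairs[of _ 0] ker(1) int_kernel_vanishes[OF u(1)] in auto)
      then show ?thesis using u(2) by simp
    next
      case 2
      then show ?thesis
        by (intro Amat_vec_eqI) (use pairs[of _ 1] ker(1) int_kernel_vanishes[OF u(1)] in auto)
    qed
  qed
  ultimately show ?thesis unfolding graver_iff using lift_in_int_kernel by blast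
qed

text \<open>A Graver element lies conformally above a swap (if it keeps coordinate \<open>4k\<close>) or a lift
  (if it raises it), and by minimality equals it.\<close>
lemma graver_level_zero:
  assumes g: "g \<in> Gr" "g (4*k) = 0"
  shows "\<exists>p<2*k. \<exists>\<sigma>. (\<sigma> = 1 \<or> \<sigma> = -1) \<and> g = swap p \<sigma>"
proof -
  have G: "g \<in> Ker" "g \<noteq> 0" "\<And>u. u \<in> Ker \<Longrightarrow> u \<noteq> 0 \<Longrightarrow> conformal u g \<Longrightarrow> u = g"
    using g(1) unfolding graver_iff by auto
  have ker: "g (Suc (4*k)) = 0" "\<And>q. q < 2*k \<Longrightarrow> g (col q) + g (col q + k) = 0"
    using G(1) g(2) unfolding int_kernel_Amat_iff by auto
  obtain j where j: "g j \<noteq> 0" using G(2) by (metis ext zero_fun_apply)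
  have "j < 4*k+2" using int_kernel_vanishes[OF G(1), of j] j by (meson not_le)
  then have "j < 4*k" using ker(1) g(2) j by (auto simp: less_Suc_eq)
  then obtain q where q: "q < 2*k" "j = col q \<or> j = col q + k" using col_surj by blast
  then have gq: "g (col q) \<noteq> 0" using ker(2)[OF q(1)] j by auto
  define \<sigma> where "\<sigma> = (if g (col q) > 0 then 1 else (-1::int))"
  have "conformal (swap q \<sigma>) g"
    unfolding conformal_def
  proof
    fix i
    have "g (col q + k) = - g (col q)" using ker(2)[OF q(1)] by simp
    then show "0 \<le> swap q \<sigma> i * g i \<and> \<bar>swap q \<sigma> i\<bar> \<le> \<bar>g i\<bar>"
      using gq unfolding \<sigma>_def swap_def by (auto simp: zero_le_mult_iff mult_le_0_iff)
  qed
  moreover have "\<sigma> = 1 \<or> \<sigma> = -1" unfolding \<sigma>_def by auto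
  ultimately show ?thesis using G(3)[OF swap_in_int_kernel[OF q(1)]] swap_in_graver[OF q(1)] q(1)
    unfolding graver_iff by blast
qed

lemma graver_level_pos:
  assumes g: "g \<in> Gr" "g (4*k) > 0"
  shows "\<exists>C. g = lift C"
proof -
  have G: "g \<in> Ker" "\<And>u. u \<in> Ker \<Longrightarrow> u \<noteq> 0 \<Longrightarrow> conformal u g \<Longrightarrow> u = g"
    using g(1) unfolding graver_iff by auto
  have ker: "g (Suc (4*k)) = - g (4*k)" "\<And>q. q < 2*k \<Longrightarrow> g (col q) + g (col q + k) = pair_sign q * g (4*k)"
    using G(1) unfolding int_kernel_Amat_iff by auto
  define C where "C = {q. q < 2*k \<and> (if q < k then g (col q) \<ge> 1 else g (col q) \<le> -1)}"
  have "conformal (lift C) g"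
    unfolding conformal_def
  proof
    fix i
    show "0 \<le> lift C i * g i \<and> \<bar>lift C i\<bar> \<le> \<bar>g i\<bar>"
    proof (rule coord_cases[of "\<lambda>i. 0 \<le> lift C i * g i \<and> \<bar>lift C i\<bar> \<le> \<bar>g i\<bar>"])
      fix q assume q: "q < 2*k"
      show "0 \<le> lift C (col q) * g (col q) \<and> \<bar>lift C (col q)\<bar> \<le> \<bar>g (col q)\<bar>"
        using q g(2) by (auto simp: C_def pair_sign_def)
      show "0 \<le> lift C (col q + k) * g (col q + k) \<and> \<bar>lift C (col q + k)\<bar> \<le> \<bar>g (col q + k)\<bar>"
        using q g(2) ker(2)[OF q] by (auto simp: C_def pair_sign_def)
    qed (use g(2) ker(1) int_kernel_vanishes[OF G(1)] in auto)
  qed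
  then show ?thesis using G(2)[OF lift_in_int_kernel] lift_in_graver unfolding graver_iff by blast
qed

lemma graver_cases:
  assumes "g \<in> Gr"
  obtains (swap) p \<sigma> where "p < 2*k" "\<sigma> = 1 \<or> \<sigma> = -1" "g = swap p \<sigma>"
  | (lift) C where "g = lift C"
  | (lower) C where "g = - lift C"
proof -
  consider "g (4*k) = 0" | "g (4*k) > 0" | "(- g) (4*k) > 0" by fastforce
  then show ?thesis
  proof cases
    case 3
    then obtain C where "- g = lift C" using graver_level_pos[OF graver_uminus[OF assms]] by blast
    then have "g = - lift C" by (metis minus_minus)
    then show ?thesis by (rule that(3))
  qed (use graver_level_zero[OF assms] graver_level_pos[OF assms] that in blast)+
qed

definition toggle :: "nat \<Rightarrow> nat set \<Rightarrow> nat set" where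
  "toggle p C = (if p \<in> C then C - {p} else insert p C)"

lemma toggle_other [simp]: "q \<noteq> p \<Longrightarrow> q \<in> toggle p C \<longleftrightarrow> q \<in> C"
  unfolding toggle_def by auto

lemma lift_toggle:
  assumes p: "p < 2*k" and \<sigma>: "\<sigma> = 1 \<or> \<sigma> = -1" and "p \<in> C \<longleftrightarrow> \<sigma> * pair_sign p = -1"
  shows "lift (toggle p C) = swap p \<sigma> + lift C"
proof (rule Amat_vec_eqI)
  fix q assume q: "q < 2*k"
  show "lift (toggle p C) (col q) = (swap p \<sigma> + lift C) (col q)"
    "lift (toggle p C) (col q + k) = (swap p \<sigma> + lift C) (col q + k)"
    using assms q by (cases "q = p"; cases "q < k"; auto simp: toggle_def)+
qed (use p in auto)

end

section \<open>The fiber graph of \<open>A\<^sub>k\<close>\<close>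

locale Amat_fiber = Amat_cols +
  fixes b :: "nat \<Rightarrow> int"
  assumes b_vec: "b \<in> Zvec (2*k+1)"
    and fiber_nonempty: "fiber (Amat k) (2*k+1) (4*k+2) b \<noteq> {}"
begin

abbreviation Fib :: "(nat \<Rightarrow> int) set" where "Fib \<equiv> fiber (Amat k) (2*k+1) (4*k+2) b"
abbreviation Edg :: "(nat \<Rightarrow> int) set set" where "Edg \<equiv> fiber_edges (Amat k) (2*k+1) (4*k+2) b Gr"
abbreviation mindeg :: nat where "mindeg \<equiv> min_degree Fib Edg"

definition level :: "(nat \<Rightarrow> int) \<Rightarrow> int" where "level u = u (4*k)"

text \<open>The value of \<open>u (col q) + u (col q + k)\<close> on the fiber vectors of level \<open>s\<close>.\<close>
definition pair_sum :: "nat \<Rightarrow> int \<Rightarrow> int" where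
  "pair_sum q s = (if q < k then b q + s else b q + b (2*k) - s)"

lemma fiber_iff:
  "u \<in> Fib \<longleftrightarrow> u \<in> Zvec (4*k+2) \<and> (\<forall>j<4*k+2. 0 \<le> u j) \<and> u (Suc (4*k)) = b (2*k) - level u \<and>
     (\<forall>q<2*k. u (col q) + u (col q + k) = pair_sum q (level u))"
proof -
  have "\<forall>i\<ge>2*k+1. b i = 0" using b_vec unfolding Zvec_def by auto
  then show ?thesis
    unfolding fiber_def mat_vec_Amat_eq_iff level_def by (auto simp: pair_sum_def algebra_simps)
qed

lemma fiberD:
  assumes "u \<in> Fib"
  shows fiber_nonneg: "j < 4*k+2 \<Longrightarrow> 0 \<le> u j"
    and fiber_col_nonneg: "q < 2*k \<Longrightarrow> 0 \<le> u (col q)" "q < 2*k \<Longrightarrow> 0 \<le> u (col q + k)"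
    and fiber_pair_sum: "q < 2*k \<Longrightarrow> u (col q) + u (col q + k) = pair_sum q (level u)"
    and fiber_last: "u (Suc (4*k)) = b (2*k) - level u"
    and fiber_vanishes: "4*k+2 \<le> j \<Longrightarrow> u j = 0"
  using assms col_bounds(1,2)[of q] unfolding fiber_iff Zvec_def by (auto simp del: col_bounds)

lemma level_nonneg: "u \<in> Fib \<Longrightarrow> 0 \<le> level u"
  using fiber_nonneg[of u "4*k"] by (simp add: level_def)

lemma level_le: "u \<in> Fib \<Longrightarrow> level u \<le> b (2*k)"
  using fiber_nonneg[of u "Suc (4*k)"] fiber_last[of u] by simp

lemma finite_fiber: "finite Fib"
proof -
  define B where "B = (\<Sum>i<2*k+1. \<bar>b i\<bar>)"
  have b_le: "\<bar>b i\<bar> \<le> B" if "i < 2*k+1" for i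
    unfolding B_def by (rule member_le_sum) (use that in auto)
  have "u j \<le> 2 * B" if u: "u \<in> Fib" for u j
  proof -
    have bounds: "0 \<le> level u" "level u \<le> b (2*k)" "\<bar>b (2*k)\<bar> \<le> B"
      using level_nonneg[OF u] level_le[OF u] b_le[of "2*k"] by auto
    show ?thesis
    proof (rule coord_cases[of "\<lambda>j. u j \<le> 2 * B"])
      fix q assume q: "q < 2*k"
      then have "u (col q) + u (col q + k) \<le> 2 * B"
        using fiber_pair_sum[OF u q] bounds b_le[of q] by (auto simp: pair_sum_def)
      then show "u (col q) \<le> 2 * B" "u (col q + k) \<le> 2 * B"
        using fiber_col_nonneg[OF u q] by auto
    next
      show "u (4*k) \<le> 2 * B" using bounds unfolding level_def by linarith
      show "u (Suc (4*k)) \<le> 2 * B" using fiber_last[OF u] bounds by linarith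
      show "u j \<le> 2 * B" if "4*k+2 \<le> j" for j using fiber_vanishes[OF u that] bounds(3) by linarith
    qed
  qed
  then have "Fib \<subseteq> {u \<in> Zvec (4*k+2). \<forall>j<4*k+2. 0 \<le> u j \<and> u j \<le> 2 * B}"
    using fiber_nonneg unfolding fiber_def by blast
  then show ?thesis using finite_bounded_Zvec finite_subset by blast
qed

lemma edge_addI: "u \<in> Fib \<Longrightarrow> u + g \<in> Fib \<Longrightarrow> g \<in> Gr \<Longrightarrow> {u, u + g} \<in> Edg"
  unfolding fiber_edges_graver_iff by simp

lemma edge_diffI: "u \<in> Fib \<Longrightarrow> u - g \<in> Fib \<Longrightarrow> g \<in> Gr \<Longrightarrow> {u - g, u} \<in> Edg"
  unfolding fiber_edges_graver_iff by simp

lemma level_add_swap [simp]: "q < 2*k \<Longrightarrow> level (u + swap q \<sigma>) = level u"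
  unfolding level_def by simp

lemma level_add_lift [simp]: "level (u + lift C) = level u + 1"
  unfolding level_def by simp

lemma level_diff_lift [simp]: "level (u - lift C) = level u - 1"
  unfolding level_def by simp

lemma add_swap_in_fiber:
  assumes u: "u \<in> Fib" and q: "q < 2*k" and "0 \<le> u (col q) + \<sigma>" "0 \<le> u (col q + k) - \<sigma>"
  shows "u + swap q \<sigma> \<in> Fib"
proof (rule fiber_add_kernel[OF u swap_in_int_kernel[OF q]])
  show "\<forall>j<4*k+2. 0 \<le> u j + swap q \<sigma> j"
  proof (rule all_coordsI)
    fix p assume p: "p < 2*k"
    show "0 \<le> u (col p) + swap q \<sigma> (col p)" "0 \<le> u (col p + k) + swap q \<sigma> (col p + k)"
      using fiber_col_nonneg[OF u p] assms(3,4) p q by auto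
  qed (use fiber_nonneg[OF u] q in auto)
qed

definition swap_sign :: "(nat \<Rightarrow> int) \<Rightarrow> nat \<Rightarrow> int" where
  "swap_sign u q = (if 1 \<le> u (col q) then -1 else 1)"

lemma swap_sign_cases: "swap_sign u q = 1 \<or> swap_sign u q = -1"
  unfolding swap_sign_def by auto

lemma add_swap_sign_in_fiber:
  assumes u: "u \<in> Fib" and q: "q < 2*k" and "1 \<le> pair_sum q (level u)"
  shows "u + swap q (swap_sign u q) \<in> Fib"
proof (rule add_swap_in_fiber[OF u q])
  show "0 \<le> u (col q) + swap_sign u q" "0 \<le> u (col q + k) - swap_sign u q"
    using fiber_col_nonneg[OF u q] fiber_pair_sum[OF u q] assms(3) unfolding swap_sign_def by auto
qed

lemma add_swap_neq: "q < 2*k \<Longrightarrow> \<sigma> \<noteq> 0 \<Longrightarrow> u + swap q \<sigma> \<noteq> u"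
  by (metis add_cancel_left_right plus_fun_apply swap_apply(1))

definition lowerable :: "(nat \<Rightarrow> int) \<Rightarrow> nat set \<Rightarrow> bool" where
  "lowerable u C \<longleftrightarrow> (\<forall>q<k. (q \<in> C \<longrightarrow> 1 \<le> u (col q)) \<and> (q \<notin> C \<longrightarrow> 1 \<le> u (col q + k)))"

lemma diff_lift_in_fiber:
  assumes u: "u \<in> Fib" and "1 \<le> level u" "lowerable u C"
  shows "u - lift C \<in> Fib"
proof (rule fiber_diff_kernel[OF u lift_in_int_kernel])
  show "\<forall>j<4*k+2. 0 \<le> u j - lift C j"
  proof (rule all_coordsI)
    fix p assume p: "p < 2*k"
    show "0 \<le> u (col p) - lift C (col p)" "0 \<le> u (col p + k) - lift C (col p + k)"
      using fiber_col_nonneg[OF u p] assms(3) p by (auto simp: pair_sign_def lowerable_def)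
  qed (use fiber_nonneg[OF u] assms(2) in \<open>auto simp: level_def\<close>)
qed

definition top_level :: int where "top_level = Max (level ` Fib)"
definition bot_level :: int where "bot_level = Min (level ` Fib)"

lemma level_le_top: "u \<in> Fib \<Longrightarrow> level u \<le> top_level"
  unfolding top_level_def using finite_fiber by auto

lemma bot_le_level: "u \<in> Fib \<Longrightarrow> bot_level \<le> level u"
  unfolding bot_level_def using finite_fiber by auto

lemma top_level_attained: obtains v where "v \<in> Fib" "level v = top_level"
proof -
  have "top_level \<in> level ` Fib"
    unfolding top_level_def using finite_fiber fiber_nonempty by (intro Max_in) auto
  then obtain v where "v \<in> Fib" "level v = top_level" by auto
  then show ?thesis by (rule that)
qed

lemma bot_level_attained: obtains v where "v \<in> Fib" "level v = bot_level"
proof -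
  have "bot_level \<in> level ` Fib"
    unfolding bot_level_def using finite_fiber fiber_nonempty by (intro Min_in) auto
  then obtain v where "v \<in> Fib" "level v = bot_level" by auto
  then show ?thesis by (rule that)
qed

lemma bot_level_nonneg: "0 \<le> bot_level"
  using bot_level_attained level_nonneg by metis

lemma top_level_nonneg: "0 \<le> top_level"
  using top_level_attained level_nonneg by metis

lemma top_level_le: "top_level \<le> b (2*k)"
  using top_level_attained level_le by metis

lemma pair_sum_top_nonneg: "q < 2*k \<Longrightarrow> 0 \<le> pair_sum q top_level"
proof -
  assume q: "q < 2*k"
  obtain v where "v \<in> Fib" "level v = top_level" by (rule top_level_attained)
  then show ?thesis using fiber_pair_sum[of v q] fiber_col_nonneg[of v q] q by force
qed

lemma pair_sum_bot_nonneg: "q < 2*k \<Longrightarrow> 0 \<le> pair_sum q bot_level"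
proof -
  assume q: "q < 2*k"
  obtain v where "v \<in> Fib" "level v = bot_level" by (rule bot_level_attained)
  then show ?thesis using fiber_pair_sum[of v q] fiber_col_nonneg[of v q] q by force
qed

definition lower_supp :: "(nat \<Rightarrow> int) \<Rightarrow> nat set" where
  "lower_supp u = {q. k \<le> q \<and> q < 2*k \<and> 1 \<le> u (col q)}"

text \<open>In a row \<open>q \<ge> k\<close> a lift removes one unit, taken from \<open>col q\<close> where that entry is positive
  and otherwise from \<open>col q + k\<close>, which is positive below the top level.\<close>
lemma add_lift_in_fiber:
  assumes u: "u \<in> Fib" and below: "level u < top_level" and A: "A \<subseteq> {..<k}"
  shows "u + lift (A \<union> lower_supp u) \<in> Fib"
proof (rule fiber_add_kernel[OF u lift_in_int_kernel])
  show "\<forall>j<4*k+2. 0 \<le> u j + lift (A \<union> lower_supp u) j"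
  proof (rule all_coordsI)
    fix p assume p: "p < 2*k"
    show "0 \<le> u (col p) + lift (A \<union> lower_supp u) (col p)"
      using fiber_col_nonneg[OF u p] p A by (auto simp: pair_sign_def lower_supp_def)
    have "1 \<le> pair_sum p (level u)" if "k \<le> p"
      using pair_sum_top_nonneg[OF p] that below unfolding pair_sum_def by auto
    then show "0 \<le> u (col p + k) + lift (A \<union> lower_supp u) (col p + k)"
      using fiber_col_nonneg[OF u p] fiber_pair_sum[OF u p] p A
      by (cases "p < k") (auto simp: pair_sign_def lower_supp_def)
  qed (use fiber_nonneg[OF u] fiber_last[OF u] below top_level_le in auto)
qed

lemma edge_cases:
  assumes "{u, v} \<in> Edg"
  obtains (swap) p \<sigma> where "p < 2*k" "\<sigma> = 1 \<or> \<sigma> = -1" "v = u + swap p \<sigma>"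
  | (lift) C where "v = u + lift C"
  | (lower) C where "v = u - lift C"
proof -
  have "v - u \<in> Gr" using assms unfolding fiber_edges_graver_iff by simp
  then show ?thesis
  proof (cases rule: graver_cases)
    case (swap p \<sigma>)
    then show ?thesis using that(1)[of p \<sigma>] by (simp add: fun_eq_iff algebra_simps)
  next
    case (lift C)
    then show ?thesis using that(2)[of C] by (simp add: fun_eq_iff algebra_simps)
  next
    case (lower C)
    then show ?thesis using that(3)[of C] by (simp add: fun_eq_iff algebra_simps)
  qed
qed

lemma level_neighbour: "{u, v} \<in> Edg \<Longrightarrow> level v \<in> {level u - 1, level u, level u + 1}"
  by (cases rule: edge_cases) auto

lemma degree_eq_card_neighbours_fiber: "degree Edg u = card {v. {u, v} \<in> Edg}"
  by (rule degree_eq_card_neighbours) (use fiber_edges_doubleton in blast)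

lemma finite_neighbours: "finite {v. {u, v} \<in> Edg}"
  using finite_fiber by (rule finite_subset[rotated]) (auto simp: fiber_edges_graver_iff)

lemma mindeg_le_degree: "u \<in> Fib \<Longrightarrow> mindeg \<le> degree Edg u"
  unfolding min_degree_def using finite_fiber by auto

definition swappable :: "nat set" where "swappable = {q. q < 2*k \<and> 1 \<le> pair_sum q top_level}"

definition descendable :: bool where
  "descendable \<longleftrightarrow> 1 \<le> top_level \<and> (\<forall>q<k. 1 \<le> pair_sum q top_level)"

lemma card_swappable_le: "card swappable \<le> 2*k"
  using card_mono[of "{..<2*k}" swappable] unfolding swappable_def by auto

text \<open>The neighbours of this vertex are one swap per swappable row and, if \<open>descendable\<close>,
  the \<open>2\<^sup>k\<close> descents by \<open>lift C\<close> with \<open>C \<subseteq> {k..<2k}\<close>; this bounds \<open>\<delta>\<close>.\<close>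
definition top_vertex :: "nat \<Rightarrow> int" where
  "top_vertex j = (if j < k then 0 else if j < 2*k then pair_sum (j - k) top_level else if j < 3*k then 0
     else if j < 4*k then pair_sum (j - 2*k) top_level else if j = 4*k then top_level
     else if j = Suc (4*k) then b (2*k) - top_level else 0)"

lemma top_vertex_apply [simp]:
  "q < 2*k \<Longrightarrow> top_vertex (col q) = 0" "q < 2*k \<Longrightarrow> top_vertex (col q + k) = pair_sum q top_level"
  "top_vertex (4*k) = top_level" "top_vertex (Suc (4*k)) = b (2*k) - top_level"
  unfolding top_vertex_def col_def by auto

lemma level_top_vertex [simp]: "level top_vertex = top_level"
  unfolding level_def by simp

lemma top_vertex_in_fiber: "top_vertex \<in> Fib"
  unfolding fiber_iff
proof (intro conjI)
  show "top_vertex \<in> Zvec (4*k+2)" unfolding Zvec_def top_vertex_def by auto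
  show "\<forall>j<4*k+2. 0 \<le> top_vertex j"
    by (rule all_coordsI) (use pair_sum_top_nonneg top_level_nonneg top_level_le in auto)
qed auto

lemma lift_restrict_lower: "C \<inter> {..<k} = {} \<Longrightarrow> lift C = lift (C \<inter> {k..<2*k})"
  by (intro Amat_vec_eqI) auto

lemma neighbours_top_vertex:
  "{v. {top_vertex, v} \<in> Edg} \<subseteq> (\<lambda>q. top_vertex + swap q 1) ` swappable \<union>
     (if descendable then (\<lambda>D. top_vertex - lift D) ` Pow {k..<2*k} else {})"
proof
  fix v assume "v \<in> {v. {top_vertex, v} \<in> Edg}"
  then have e: "{top_vertex, v} \<in> Edg" by simp
  then have v: "v \<in> Fib" unfolding fiber_edges_graver_iff by simp
  from e show "v \<in> (\<lambda>q. top_vertex + swap q 1) ` swappable \<union>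
     (if descendable then (\<lambda>D. top_vertex - lift D) ` Pow {k..<2*k} else {})"
  proof (cases rule: edge_cases)
    case (swap p \<sigma>)
    then have "0 \<le> v (col p)" "0 \<le> v (col p + k)" using fiber_col_nonneg[OF v, of p] by auto
    then have "\<sigma> = 1" "p \<in> swappable" using swap by (auto simp: swappable_def)
    then show ?thesis using swap by auto
  next
    case (lift C)
    then show ?thesis using level_le_top[OF v] by simp
  next
    case (lower C)
    have C: "q \<notin> C \<and> 1 \<le> pair_sum q top_level" if "q < k" for q
      using fiber_col_nonneg[OF v, of q] that lower by (cases "q \<in> C") (auto simp: pair_sign_def)
    moreover have "1 \<le> top_level"
      using bot_le_level[OF v] bot_level_nonneg lower by simp
    ultimately have "descendable" "lift C = lift (C \<inter> {k..<2*k})"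
      using lift_restrict_lower[of C] unfolding descendable_def by auto
    then show ?thesis using lower by auto
  qed
qed

lemma degree_top_vertex_le: "degree Edg top_vertex \<le> card swappable + (if descendable then 2^k else 0)"
proof -
  let ?S1 = "(\<lambda>q. top_vertex + swap q 1) ` swappable"
  let ?S2 = "if descendable then (\<lambda>D. top_vertex - lift D) ` Pow {k..<2*k} else {}"
  have "finite ?S1" "finite ?S2" by (auto simp: swappable_def)
  then have "degree Edg top_vertex \<le> card (?S1 \<union> ?S2)"
    unfolding degree_eq_card_neighbours_fiber by (intro card_mono neighbours_top_vertex) auto
  also have "\<dots> \<le> card ?S1 + card ?S2" by (rule card_Un_le)
  also have "card ?S1 \<le> card swappable" by (rule card_image_le) (auto simp: swappable_def)
  also have "card ?S2 \<le> (if descendable then 2^k else 0)"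
    using card_image_le[of "Pow {k..<2*k}" "\<lambda>D. top_vertex - lift D"] by (simp add: card_Pow)
  finally show ?thesis by simp
qed

lemma mindeg_le_top_bound: "mindeg \<le> card swappable + (if descendable then 2^k else 0)"
  using mindeg_le_degree[OF top_vertex_in_fiber] degree_top_vertex_le by linarith

subsection \<open>Walks one level up\<close>

abbreviation linked :: "(nat \<Rightarrow> int) \<Rightarrow> (nat \<Rightarrow> int) \<Rightarrow> bool" where
  "linked \<equiv> edge_linked Edg mindeg"

lemma pair_sum_between:
  assumes "bot_level < s" "s < top_level" "q < 2*k"
  shows "1 \<le> pair_sum q s"
  using pair_sum_bot_nonneg[OF assms(3)] pair_sum_top_nonneg[OF assms(3)] assms(1,2)
  unfolding pair_sum_def by auto

definition up_walk :: "(nat \<Rightarrow> int) \<Rightarrow> nat set \<Rightarrow> (nat \<Rightarrow> int) list" where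
  "up_walk u A = [u, u + lift (A \<union> lower_supp u)]"

definition swap_up_walk :: "(nat \<Rightarrow> int) \<Rightarrow> nat \<Rightarrow> (nat \<Rightarrow> int) list" where
  "swap_up_walk u q =
     (let n = u + swap q (swap_sign u q) in [u, n, n + lift (lower_supp n)])"

definition middle_walks :: "(nat \<Rightarrow> int) \<Rightarrow> (nat \<Rightarrow> int) list set" where
  "middle_walks u = up_walk u ` Pow {..<k} \<union> swap_up_walk u ` {..<2*k}"

lemma lift_step:
  assumes "u \<in> Fib" "level u < top_level"
  shows "u + lift (lower_supp u) \<in> Fib" "{u, u + lift (lower_supp u)} \<in> Edg"
proof -
  show *: "u + lift (lower_supp u) \<in> Fib"
    using add_lift_in_fiber[OF assms, of "{}"] by simp
  show "{u, u + lift (lower_supp u)} \<in> Edg"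
    by (rule edge_addI[OF assms(1) * lift_in_graver])
qed

lemma middle_walk_props:
  assumes u: "u \<in> Fib" and s: "bot_level < level u" "level u < top_level" and P: "P \<in> middle_walks u"
  shows "P \<noteq> [] \<and> hd P = u \<and> walk_edges P \<subseteq> Edg \<and> last P \<in> Fib \<and> level (last P) = level u + 1"
  using P unfolding middle_walks_def
proof
  assume "P \<in> up_walk u ` Pow {..<k}"
  then obtain A where A: "A \<subseteq> {..<k}" "P = up_walk u A" by auto
  have "u + lift (A \<union> lower_supp u) \<in> Fib" by (rule add_lift_in_fiber[OF u s(2) A(1)])
  then show ?thesis using edge_addI[OF u _ lift_in_graver] A(2) by (simp add: up_walk_def)
next
  assume "P \<in> swap_up_walk u ` {..<2*k}"
  then obtain q where q: "q < 2*k" "P = swap_up_walk u q" by auto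
  define n where "n = u + swap q (swap_sign u q)"
  have n: "n \<in> Fib" "level n = level u"
    using add_swap_sign_in_fiber[OF u q(1) pair_sum_between[OF s q(1)]] q(1) by (simp_all add: n_def)
  have "{u, n} \<in> Edg" unfolding n_def
    by (rule edge_addI[OF u _ swap_in_graver[OF q(1) swap_sign_cases]]) (use n in \<open>simp add: n_def\<close>)
  then show ?thesis using lift_step[of n] n s q(2) by (simp add: swap_up_walk_def n_def[symmetric])
qed

lemma card_middle_walks: "card (middle_walks u) = 2^k + 2*k"
proof -
  have "inj_on (up_walk u) (Pow {..<k})"
  proof (rule inj_onI)
    fix A A' assume A: "A \<in> Pow {..<k}" "A' \<in> Pow {..<k}" "up_walk u A = up_walk u A'"
    then have "(u + lift (A \<union> lower_supp u)) (col q) = (u + lift (A' \<union> lower_supp u)) (col q)" for q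
      by (simp add: up_walk_def)
    note col_eq = this
    have "q \<in> A \<longleftrightarrow> q \<in> A'" if "q < k" for q
      using col_eq[of q] that by (simp add: lower_supp_def pair_sign_def of_bool_def split: if_splits)
    then show "A = A'" using A(1,2) by auto
  qed
  moreover have "inj_on (swap_up_walk u) {..<2*k}"
  proof (rule inj_onI)
    fix q q' assume q: "q \<in> {..<2*k}" "q' \<in> {..<2*k}" "swap_up_walk u q = swap_up_walk u q'"
    then have "(u + swap q (swap_sign u q)) (col q) = (u + swap q' (swap_sign u q')) (col q)"
      by (simp add: swap_up_walk_def Let_def)
    then show "q = q'" using q(1,2) swap_sign_cases[of u q] by (auto split: if_splits)
  qed
  moreover have "up_walk u ` Pow {..<k} \<inter> swap_up_walk u ` {..<2*k} = {}"
    by (auto simp: up_walk_def swap_up_walk_def Let_def)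
  ultimately show ?thesis
    unfolding middle_walks_def by (simp add: card_Un_disjoint card_image card_Pow)
qed

lemma middle_walk_shape:
  assumes u: "u \<in> Fib" and s: "bot_level < level u" "level u < top_level" and P: "P \<in> middle_walks u"
  obtains (up) a where "P = [u, a]" "level a = level u + 1"
  | (swap_up) n where "P = [u, n, n + lift (lower_supp n)]" "n \<noteq> u" "level n = level u"
proof -
  note props = middle_walk_props[OF u s P]
  show ?thesis using P unfolding middle_walks_def
  proof
    assume "P \<in> up_walk u ` Pow {..<k}"
    then show ?thesis using props that(1) by (auto simp: up_walk_def)
  next
    assume "P \<in> swap_up_walk u ` {..<2*k}"
    then obtain q where q: "q < 2*k" "P = swap_up_walk u q" by auto
    define n where "n = u + swap q (swap_sign u q)"
    have "n \<noteq> u" unfolding n_def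
      by (rule add_swap_neq[OF q(1)]) (use swap_sign_cases[of u q] in auto)
    then show ?thesis using props q that(2) by (simp add: swap_up_walk_def n_def[symmetric])
  qed
qed

text \<open>Walks through distinct first vertices: comparing levels separates their edges.\<close>
lemma middle_walks_disjoint:
  assumes u: "u \<in> Fib" and s: "bot_level < level u" "level u < top_level"
    and P: "P \<in> middle_walks u" and Q: "Q \<in> middle_walks u" and "P \<noteq> Q"
  shows "walk_edges P \<inter> walk_edges Q = {}"
proof -
  have neq: "x \<noteq> y" if "level x \<noteq> level y" for x y using that by auto
  show ?thesis
  proof (rule middle_walk_shape[OF u s P])
    fix a assume Pa: "P = [u, a]" "level a = level u + 1"
    show ?thesis
      by (rule middle_walk_shape[OF u s Q])
        (use Pa \<open>P \<noteq> Q\<close> neq[of a u] neq[of a] neq[of u] in \<open>auto simp: doubleton_eq_iff\<close>)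
  next
    fix n assume Pn: "P = [u, n, n + lift (lower_supp n)]" "n \<noteq> u" "level n = level u"
    show ?thesis
      by (rule middle_walk_shape[OF u s Q])
        (use Pn \<open>P \<noteq> Q\<close> neq[of _ u] neq[of n] neq[of u] in \<open>auto simp: doubleton_eq_iff\<close>)
  qed
qed

lemma linked_middle:
  assumes u: "u \<in> Fib" and s: "bot_level < level u" "level u < top_level"
    and IH: "\<And>w. w \<in> Fib \<Longrightarrow> level w = level u + 1 \<Longrightarrow> linked w v"
  shows "linked u v"
proof (rule edge_linked_by_disjoint_walks)
  show "finite (middle_walks u)" by (simp add: middle_walks_def)
  show "mindeg \<le> card (middle_walks u)"
    using mindeg_le_top_bound card_swappable_le unfolding card_middle_walks
    by (auto split: if_split_asm)
qed (use middle_walk_props[OF u s] IH middle_walks_disjoint[OF u s] in auto)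

definition bottom_walk :: "(nat \<Rightarrow> int) \<Rightarrow> (nat \<Rightarrow> int) \<Rightarrow> (nat \<Rightarrow> int) list" where
  "bottom_walk u n = (if level n = level u + 1 then [u, n] else [u, n, n + lift (lower_supp n)])"

definition bottom_walks :: "(nat \<Rightarrow> int) \<Rightarrow> (nat \<Rightarrow> int) list set" where
  "bottom_walks u = bottom_walk u ` {n. {u, n} \<in> Edg}"

lemma bottom_walk_props:
  assumes u: "level u = bot_level" "bot_level < top_level" and n: "{u, n} \<in> Edg"
  shows "hd (bottom_walk u n) = u \<and> walk_edges (bottom_walk u n) \<subseteq> Edg \<and>
    last (bottom_walk u n) \<in> Fib \<and> level (last (bottom_walk u n)) = level u + 1"
proof -
  have "n \<in> Fib" using n unfolding fiber_edges_graver_iff by simp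
  moreover have "level n = level u \<or> level n = level u + 1"
    using level_neighbour[OF n] bot_le_level[OF \<open>n \<in> Fib\<close>] u(1) by auto
  ultimately show ?thesis
    using n lift_step[of n] u unfolding bottom_walk_def by auto
qed

lemma bottom_walks_disjoint:
  assumes u: "level u = bot_level" and n: "{u, n} \<in> Edg" and n': "{u, n'} \<in> Edg" and "n \<noteq> n'"
  shows "walk_edges (bottom_walk u n) \<inter> walk_edges (bottom_walk u n') = {}"
proof -
  have level: "level x \<in> {level u, level u + 1}" if "{u, x} \<in> Edg" for x
    using level_neighbour[OF that] bot_le_level[of x] that u
    unfolding fiber_edges_graver_iff by auto
  have "u \<noteq> n" "u \<noteq> n'" using n n' unfolding fiber_edges_graver_iff by (auto simp: graver_iff)
  then show ?thesis
    using level[OF n] level[OF n'] \<open>n \<noteq> n'\<close> unfolding bottom_walk_def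
    by (auto simp: doubleton_eq_iff dest: arg_cong[of _ _ level])
qed

lemma linked_bottom:
  assumes u: "u \<in> Fib" "level u = bot_level" "bot_level < top_level"
    and IH: "\<And>w. w \<in> Fib \<Longrightarrow> level w = level u + 1 \<Longrightarrow> linked w v"
  shows "linked u v"
proof (rule edge_linked_by_disjoint_walks[where W = "bottom_walks u"])
  show "finite (bottom_walks u)" using finite_neighbours by (simp add: bottom_walks_def)
  have "inj_on (bottom_walk u) {n. {u, n} \<in> Edg}"
    by (rule inj_onI) (auto simp: bottom_walk_def split: if_splits)
  then have "card (bottom_walks u) = degree Edg u"
    unfolding degree_eq_card_neighbours_fiber bottom_walks_def by (rule card_image)
  then show "mindeg \<le> card (bottom_walks u)" using mindeg_le_degree[OF u(1)] by (simp only:)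
next
  fix P assume "P \<in> bottom_walks u"
  then obtain n where n: "{u, n} \<in> Edg" "P = bottom_walk u n" unfolding bottom_walks_def by auto
  then have "P \<noteq> []" by (simp add: bottom_walk_def)
  with bottom_walk_props[OF u(2,3) n(1)] IH[of "last P"]
  show "P \<noteq> [] \<and> hd P = u \<and> walk_edges P \<subseteq> Edg \<and> linked (last P) v"
    unfolding n(2) by blast
next
  fix P Q assume "P \<in> bottom_walks u" "Q \<in> bottom_walks u" "P \<noteq> Q"
  then obtain n n' where "{u, n} \<in> Edg" "{u, n'} \<in> Edg" "n \<noteq> n'"
    "P = bottom_walk u n" "Q = bottom_walk u n'" unfolding bottom_walks_def by blast
  then show "walk_edges P \<inter> walk_edges Q = {}" using bottom_walks_disjoint[OF u(2)] by blast
qed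

end

subsection \<open>Walks within the top level\<close>

locale top_swap = Amat_fiber +
  fixes u :: "nat \<Rightarrow> int" and p :: nat and \<sigma> :: int
  assumes u_fiber: "u \<in> Fib" and u_top: "level u = top_level"
    and p_row: "p < 2*k" and \<sigma>_unit: "\<sigma> = 1 \<or> \<sigma> = -1"
    and v_fiber: "u + swap p \<sigma> \<in> Fib"
begin

abbreviation v :: "nat \<Rightarrow> int" where "v \<equiv> u + swap p \<sigma>"

lemma v_top: "level v = top_level"
  using p_row u_top by simp

lemma uv_edge: "{u, v} \<in> Edg"
  by (rule edge_addI[OF u_fiber v_fiber swap_in_graver[OF p_row \<sigma>_unit]])

lemma p_swappable: "p \<in> swappable"
proof -
  have "0 \<le> v (col p)" "0 \<le> v (col p + k)"
    using fiber_col_nonneg[OF v_fiber p_row] by auto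
  then show ?thesis
    using fiber_col_nonneg[OF u_fiber p_row] fiber_pair_sum[OF u_fiber p_row] u_top p_row \<sigma>_unit
    unfolding swappable_def by auto
qed

definition square_walk :: "nat \<Rightarrow> (nat \<Rightarrow> int) list" where
  "square_walk q = [u, u + swap q (swap_sign u q), v + swap q (swap_sign u q), v]"

lemma square_walk_props:
  assumes q: "q \<in> swappable" "q \<noteq> p"
  shows "walk_edges (square_walk q) \<subseteq> Edg" "z \<in> set (square_walk q) \<Longrightarrow> level z = top_level"
proof -
  have q2: "q < 2*k" and pos: "1 \<le> pair_sum q (level u)" using q u_top unfolding swappable_def by auto
  define \<tau> where "\<tau> = swap_sign u q"
  have \<tau>: "\<tau> = 1 \<or> \<tau> = -1" unfolding \<tau>_def by (rule swap_sign_cases)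
  have x: "u + swap q \<tau> \<in> Fib" unfolding \<tau>_def by (rule add_swap_sign_in_fiber[OF u_fiber q2 pos])
  have y: "v + swap q \<tau> \<in> Fib"
    by (rule add_swap_in_fiber[OF v_fiber q2])
      (use fiber_col_nonneg[OF u_fiber q2] fiber_pair_sum[OF u_fiber q2] pos q(2) q2 p_row in
        \<open>auto simp: \<tau>_def swap_sign_def\<close>)
  have "{u + swap q \<tau>, v + swap q \<tau>} \<in> Edg"
    using edge_addI[OF x _ swap_in_graver[OF p_row \<sigma>_unit]] y by (simp add: algebra_simps)
  moreover have "{v + swap q \<tau>, v} \<in> Edg"
    using edge_addI[OF v_fiber y swap_in_graver[OF q2 \<tau>]] by (simp add: insert_commute)
  ultimately show "walk_edges (square_walk q) \<subseteq> Edg"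
    using edge_addI[OF u_fiber x swap_in_graver[OF q2 \<tau>]] unfolding square_walk_def \<tau>_def by simp
  show "z \<in> set (square_walk q) \<Longrightarrow> level z = top_level"
    using q2 p_row u_top unfolding square_walk_def by auto
qed

lemma square_walk_edge_moves:
  assumes "q < 2*k" "e \<in> walk_edges (square_walk q)"
  shows "\<exists>z\<in>e. z (col q) \<noteq> u (col q)"
  using assms swap_sign_cases[of u q] unfolding square_walk_def by auto

lemma square_walk_fixes:
  assumes "q < 2*k" "r < 2*k" "r \<noteq> q" "r \<noteq> p" "z \<in> set (square_walk q)"
  shows "z (col r) = u (col r)"
  using assms p_row unfolding square_walk_def by auto

definition top_walks :: "(nat \<Rightarrow> int) list set" where
  "top_walks = insert [u, v] (square_walk ` (swappable - {p}))"

lemma top_walks_disjoint: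
  assumes P: "P \<in> top_walks" and Q: "Q \<in> top_walks" and "P \<noteq> Q"
  shows "walk_edges P \<inter> walk_edges Q = {}"
proof -
  have separated: "walk_edges (square_walk q) \<inter> walk_edges R = {}"
    if q: "q \<in> swappable - {p}" and R: "R \<in> top_walks" "R \<noteq> square_walk q" for q R
  proof (rule walk_edges_disjointI[where P = "\<lambda>z. z (col q) \<noteq> u (col q)"])
    have q2: "q < 2*k" using q unfolding swappable_def by auto
    then show "\<exists>z\<in>e. z (col q) \<noteq> u (col q)" if "e \<in> walk_edges (square_walk q)" for e
      using square_walk_edge_moves that by blast
    show "\<not> z (col q) \<noteq> u (col q)" if "z \<in> set R" for z
    proof (cases "R = [u, v]")
      case True
      then show ?thesis using that q q2 p_row by auto
    next
      case False
      then obtain q' where "q' \<in> swappable - {p}" "R = square_walk q'" using R(1) unfolding top_walks_def by auto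
      then show ?thesis
        using square_walk_fixes[of q' q z] that q q2 R(2) unfolding swappable_def by auto
    qed
  qed
  show ?thesis
  proof (cases "P = [u, v]")
    case True
    then obtain q where "q \<in> swappable - {p}" "Q = square_walk q"
      using Q \<open>P \<noteq> Q\<close> unfolding top_walks_def by auto
    then show ?thesis using separated[of q P] P \<open>P \<noteq> Q\<close> by auto
  next
    case False
    then obtain q where "q \<in> swappable - {p}" "P = square_walk q" using P unfolding top_walks_def by auto
    then show ?thesis using separated[of q Q] Q \<open>P \<noteq> Q\<close> by auto
  qed
qed

lemma card_top_walks: "card top_walks = card swappable"
proof -
  have "inj_on square_walk (swappable - {p})"
  proof (rule inj_onI)
    fix q q' assume q: "q \<in> swappable - {p}" "q' \<in> swappable - {p}" "square_walk q = square_walk q'"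
    then have "(u + swap q (swap_sign u q)) (col q) = (u + swap q' (swap_sign u q')) (col q)"
      unfolding square_walk_def by simp
    then show "q = q'" using q(1,2) swap_sign_cases[of u q] unfolding swappable_def by (auto split: if_splits)
  qed
  moreover have "[u, v] \<notin> square_walk ` (swappable - {p})" by (auto simp: square_walk_def)
  moreover have "finite swappable" unfolding swappable_def by simp
  moreover from this have "0 < card swappable" using p_swappable card_gt_0_iff by blast
  ultimately show ?thesis
    using p_swappable unfolding top_walks_def by (simp add: card_image card_Diff_singleton)
qed

text \<open>Every descent lowers the rows \<open>q < k\<close> where \<open>u\<close> is positive; row \<open>p\<close> is chosen so that
  the same lift can also be subtracted from \<open>v\<close>.\<close>
definition lower_base :: "nat set" where
  "lower_base = {q. q < k \<and> q \<noteq> p \<and> 1 \<le> u (col q)} \<union> (if p < k \<and> \<sigma> = -1 then {p} else {})"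

definition descent_set :: "nat set \<Rightarrow> nat set" where
  "descent_set D = lower_base \<union> D"

text \<open>Whether \<open>v\<close> is reached from \<open>u - lift (descent_set D)\<close> by a single lift; otherwise the
  descent walk performs the swap one level down.\<close>
definition direct :: "nat set \<Rightarrow> bool" where
  "direct D \<longleftrightarrow> (p \<in> descent_set D \<longleftrightarrow> \<sigma> * pair_sign p = -1)"

definition descent_walk :: "nat set \<Rightarrow> (nat \<Rightarrow> int) list" where
  "descent_walk D = (let C = descent_set D in
     if direct D then [u, u - lift C, v]
     else [u, u - lift C, u - lift (toggle p C), v - lift (toggle p C), v])"

lemma lowerable_descent_set:
  assumes "descendable" "D \<subseteq> {k..<2*k}"
  shows "lowerable u (descent_set D)"
  unfolding lowerable_def
proof (intro allI impI conjI)
  fix q assume q: "q < k"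
  then have q2: "q < 2*k" by simp
  have "0 \<le> v (col q)" "0 \<le> v (col q + k)" using fiber_col_nonneg[OF v_fiber q2] by auto
  moreover have "u (col q) + u (col q + k) = pair_sum q top_level" "1 \<le> pair_sum q top_level"
    using fiber_pair_sum[OF u_fiber q2] u_top assms(1) q unfolding descendable_def by auto
  moreover have "0 \<le> u (col q)" using fiber_col_nonneg[OF u_fiber q2] by simp
  ultimately show "q \<in> descent_set D \<Longrightarrow> 1 \<le> u (col q)" "q \<notin> descent_set D \<Longrightarrow> 1 \<le> u (col q + k)"
    using assms(2) q p_row \<sigma>_unit unfolding descent_set_def lower_base_def
    by (auto split: if_splits)
qed

lemma lower_p_if_not_direct:
  assumes "D \<subseteq> {k..<2*k}" "\<not> direct D"
  shows "k \<le> p"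
  using assms \<sigma>_unit unfolding direct_def descent_set_def lower_base_def
  by (cases "p < k") auto

lemma descent_walk_edges:
  assumes desc: "descendable" and D: "D \<subseteq> {k..<2*k}"
  shows "walk_edges (descent_walk D) \<subseteq> Edg"
proof -
  define C where "C = descent_set D"
  have top1: "1 \<le> level u" using desc u_top unfolding descendable_def by simp
  have c: "u - lift C \<in> Fib"
    unfolding C_def by (rule diff_lift_in_fiber[OF u_fiber top1 lowerable_descent_set[OF desc D]])
  have uc: "{u, u - lift C} \<in> Edg"
    using edge_diffI[OF u_fiber c lift_in_graver] by (simp add: insert_commute)
  show ?thesis
  proof (cases "direct D")
    case True
    then have "lift (toggle p C) = swap p \<sigma> + lift C"
      unfolding C_def direct_def by (intro lift_toggle[OF p_row \<sigma>_unit]) simp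
    then have "{u - lift C, v} \<in> Edg"
      using edge_addI[OF c _ lift_in_graver, of "toggle p C"] v_fiber by (simp add: algebra_simps)
    then show ?thesis using True uc unfolding descent_walk_def C_def by (simp add: Let_def)
  next
    case False
    then have pk: "k \<le> p" using lower_p_if_not_direct[OF D] by simp
    have "lift (toggle p C) = swap p (- \<sigma>) + lift C"
      using False \<sigma>_unit pk unfolding C_def direct_def by (intro lift_toggle[OF p_row]) auto
    then have d1: "u - lift (toggle p C) = (u - lift C) + swap p \<sigma>"
      and d2: "v - lift (toggle p C) = (u - lift (toggle p C)) + swap p \<sigma>"
      by (auto simp: fun_eq_iff swap_def)
    have "lowerable v (toggle p C)"
      using lowerable_descent_set[OF desc D] pk p_row unfolding lowerable_def C_def by auto
    then have f2: "v - lift (toggle p C) \<in> Fib"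
      using diff_lift_in_fiber[OF v_fiber] top1 p_row by simp
    have "lowerable u (toggle p C)"
      using lowerable_descent_set[OF desc D] pk unfolding lowerable_def C_def by auto
    then have f1: "u - lift (toggle p C) \<in> Fib" by (rule diff_lift_in_fiber[OF u_fiber top1])
    have "{u - lift C, u - lift (toggle p C)} \<in> Edg" "{u - lift (toggle p C), v - lift (toggle p C)} \<in> Edg"
      using edge_addI[OF c _ swap_in_graver[OF p_row \<sigma>_unit]]
        edge_addI[OF f1 _ swap_in_graver[OF p_row \<sigma>_unit]] f1 f2 unfolding d1 d2 by auto
    moreover have "{v - lift (toggle p C), v} \<in> Edg"
      using edge_diffI[OF v_fiber f2 lift_in_graver] .
    ultimately show ?thesis using False uc unfolding descent_walk_def C_def by (simp add: Let_def)
  qed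
qed

lemma descent_set_lower: "D \<subseteq> {k..<2*k} \<Longrightarrow> k \<le> r \<Longrightarrow> r \<in> descent_set D \<longleftrightarrow> r \<in> D"
  unfolding descent_set_def lower_base_def by auto

lemma descent_walk_edge_inner:
  assumes D: "D \<subseteq> {k..<2*k}" and e: "e \<in> walk_edges (descent_walk D)"
  shows "\<exists>z\<in>e. level z = top_level - 1 \<and>
    (\<forall>r. k \<le> r \<longrightarrow> r < 2*k \<longrightarrow> r \<noteq> p \<longrightarrow> z (col r) = u (col r) + of_bool (r \<in> D))"
  using e descent_set_lower[OF D] p_row u_top unfolding descent_walk_def
  by (auto simp: Let_def split: if_splits)

lemma descent_walk_vertex:
  assumes D: "D \<subseteq> {k..<2*k}" and z: "z \<in> set (descent_walk D)" and "level z = top_level - 1"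
  shows "\<forall>r. k \<le> r \<longrightarrow> r < 2*k \<longrightarrow> r \<noteq> p \<longrightarrow> z (col r) = u (col r) + of_bool (r \<in> D)"
  using assms descent_set_lower[OF D] p_row u_top unfolding descent_walk_def
  by (auto simp: Let_def split: if_splits)

lemma descent_walks_disjoint_at_p:
  assumes D: "D \<subseteq> {k..<2*k}" "direct D" and D': "D' \<subseteq> {k..<2*k}" "\<not> direct D'"
    and p: "p \<in> D \<longleftrightarrow> p \<notin> D'"
  shows "walk_edges (descent_walk D) \<inter> walk_edges (descent_walk D') = {}"
proof -
  have pk: "k \<le> p" by (rule lower_p_if_not_direct[OF D'])
  have "p \<in> D \<longleftrightarrow> \<sigma> = 1"
    using D(2) descent_set_lower[OF D(1) pk] pk \<sigma>_unit unfolding direct_def by auto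
  define f where "f z = (level z, z (col p))" for z :: "nat \<Rightarrow> int"
  have "f ` e \<noteq> f ` e'" if "e \<in> walk_edges (descent_walk D)" "e' \<in> walk_edges (descent_walk D')" for e e'
    using that D(2) D'(2) p pk p_row u_top \<sigma>_unit \<open>p \<in> D \<longleftrightarrow> \<sigma> = 1\<close>
      descent_set_lower[OF D(1) pk] descent_set_lower[OF D'(1) pk]
    unfolding descent_walk_def f_def by (auto simp: Let_def doubleton_eq_iff toggle_def)
  then show ?thesis by blast
qed

lemma descent_walks_disjoint:
  assumes D: "D \<subseteq> {k..<2*k}" and D': "D' \<subseteq> {k..<2*k}" and "D \<noteq> D'"
  shows "walk_edges (descent_walk D) \<inter> walk_edges (descent_walk D') = {}"
proof (cases "\<exists>r. k \<le> r \<and> r < 2*k \<and> r \<noteq> p \<and> (r \<in> D \<longleftrightarrow> r \<notin> D')")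
  case True
  then obtain r where r: "k \<le> r" "r < 2*k" "r \<noteq> p" "r \<in> D \<longleftrightarrow> r \<notin> D'" by blast
  let ?P = "\<lambda>z. level z = top_level - 1 \<and> z (col r) = u (col r) + of_bool (r \<in> D)"
  show ?thesis
  proof (rule walk_edges_disjointI[where P = ?P])
    fix e assume "e \<in> walk_edges (descent_walk D)"
    from descent_walk_edge_inner[OF D this] obtain z where
      "z \<in> e" "level z = top_level - 1"
      "\<forall>r. k \<le> r \<longrightarrow> r < 2*k \<longrightarrow> r \<noteq> p \<longrightarrow> z (col r) = u (col r) + of_bool (r \<in> D)"
      by blast
    then show "\<exists>z\<in>e. ?P z" using r(1-3) by blast
  next
    fix z assume "z \<in> set (descent_walk D')"
    from descent_walk_vertex[OF D' this] have
      "level z = top_level - 1 \<Longrightarrow> z (col r) = u (col r) + of_bool (r \<in> D')"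
      using r(1-3) by blast
    then show "\<not> ?P z" using r(4) by (cases "r \<in> D") auto
  qed
next
  case False
  obtain r where r: "(r \<in> D) \<noteq> (r \<in> D')" using \<open>D \<noteq> D'\<close> by blast
  then have "k \<le> r" "r < 2*k" using D D' by auto
  with False r have "r = p" by blast
  with r \<open>k \<le> r\<close> have p: "p \<in> D \<longleftrightarrow> p \<notin> D'" and pk: "k \<le> p" by auto
  then have "direct D \<longleftrightarrow> \<not> direct D'"
    using descent_set_lower[OF D pk] descent_set_lower[OF D' pk] unfolding direct_def by auto
  then show ?thesis
    using descent_walks_disjoint_at_p[OF D _ D'] descent_walks_disjoint_at_p[OF D' _ D] p by blast
qed

definition descent_walks :: "(nat \<Rightarrow> int) list set" where
  "descent_walks = (if descendable then descent_walk ` Pow {k..<2*k} else {})"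

lemma card_descent_walks: "card descent_walks = (if descendable then 2^k else 0)"
proof -
  have "inj_on descent_walk (Pow {k..<2*k})"
  proof (rule inj_onI)
    fix D D' assume D: "D \<in> Pow {k..<2*k}" "D' \<in> Pow {k..<2*k}" "descent_walk D = descent_walk D'"
    have "{u, u - lift (descent_set D)} \<in> walk_edges (descent_walk D)"
      by (simp add: descent_walk_def Let_def)
    then have "walk_edges (descent_walk D) \<inter> walk_edges (descent_walk D') \<noteq> {}"
      using D(3) by auto
    then show "D = D'" using descent_walks_disjoint[of D D'] D(1,2) by auto
  qed
  then have "card (descent_walk ` Pow {k..<2*k}) = 2^k" by (simp add: card_image card_Pow)
  then show ?thesis unfolding descent_walks_def by simp
qed

lemma top_descent_walks_disjoint:
  assumes "P \<in> top_walks" "Q \<in> descent_walks"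
  shows "walk_edges Q \<inter> walk_edges P = {}"
proof -
  obtain D where D: "D \<subseteq> {k..<2*k}" "Q = descent_walk D"
    using assms(2) unfolding descent_walks_def by (auto split: if_splits)
  show ?thesis
  proof (rule walk_edges_disjointI[where P = "\<lambda>z. level z = top_level - 1"])
    show "\<exists>z\<in>e. level z = top_level - 1" if "e \<in> walk_edges Q" for e
      using descent_walk_edge_inner[OF D(1)] that D(2) by blast
    show "\<not> level z = top_level - 1" if "z \<in> set P" for z
    proof -
      have "level z = top_level"
        using assms(1) that square_walk_props(2) v_top u_top unfolding top_walks_def by auto
      then show ?thesis by simp
    qed
  qed
qed

lemma walk_to_v:
  assumes "P \<in> top_walks \<union> descent_walks"
  shows "P \<noteq> [] \<and> hd P = u \<and> walk_edges P \<subseteq> Edg \<and> last P = v"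
proof -
  have "walk_edges P \<subseteq> Edg"
  proof (cases "P \<in> descent_walks")
    case True
    then obtain D where "descendable" "D \<subseteq> {k..<2*k}" "P = descent_walk D"
      unfolding descent_walks_def by (auto split: if_splits)
    then show ?thesis using descent_walk_edges by simp
  next
    case False
    then show ?thesis using assms uv_edge square_walk_props(1) unfolding top_walks_def by auto
  qed
  moreover have "P \<noteq> [] \<and> hd P = u \<and> last P = v"
    using assms unfolding top_walks_def descent_walks_def
    by (auto simp: square_walk_def descent_walk_def Let_def split: if_splits)
  ultimately show ?thesis by blast
qed

lemma linked_swap: "linked u v"
proof (rule edge_linked_by_disjoint_walks[where W = "top_walks \<union> descent_walks"])
  show fin: "finite (top_walks \<union> descent_walks)"
    unfolding top_walks_def descent_walks_def swappable_def by simp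
  have "top_walks \<inter> descent_walks = {}"
    unfolding top_walks_def descent_walks_def square_walk_def descent_walk_def by (auto simp: Let_def)
  then have "card (top_walks \<union> descent_walks) = card swappable + (if descendable then 2^k else 0)"
    using fin card_top_walks card_descent_walks by (simp add: card_Un_disjoint)
  then show "mindeg \<le> card (top_walks \<union> descent_walks)"
    using mindeg_le_top_bound by simp
next
  fix P assume "P \<in> top_walks \<union> descent_walks"
  then show "P \<noteq> [] \<and> hd P = u \<and> walk_edges P \<subseteq> Edg \<and> linked (last P) v"
    using walk_to_v edge_linked_refl by metis
next
  fix P Q assume "P \<in> top_walks \<union> descent_walks" "Q \<in> top_walks \<union> descent_walks" "P \<noteq> Q"
  moreover have "walk_edges P \<inter> walk_edges Q = {}" if "P \<in> descent_walks" "Q \<in> descent_walks" "P \<noteq> Q"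
    using that descent_walks_disjoint unfolding descent_walks_def by (auto split: if_splits)
  ultimately show "walk_edges P \<inter> walk_edges Q = {}"
    using top_walks_disjoint top_descent_walks_disjoint by blast
qed

end

context Amat_fiber
begin

lemma linked_top_swap:
  assumes "u \<in> Fib" "level u = top_level" "p < 2*k" "\<sigma> = 1 \<or> \<sigma> = -1" "u + swap p \<sigma> \<in> Fib"
  shows "linked u (u + swap p \<sigma>)"
proof -
  interpret top_swap k b u p \<sigma>
    by (intro top_swap.intro top_swap_axioms.intro Amat_fiber_axioms assms)
  show ?thesis by (rule linked_swap)
qed

lemma fiber_eqI:
  assumes u: "u \<in> Fib" and v: "v \<in> Fib" and "level u = level v" and cols: "\<And>q. q < 2*k \<Longrightarrow> u (col q) = v (col q)"
  shows "u = v"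
proof (rule Amat_vec_eqI)
  fix q assume q: "q < 2*k"
  show "u (col q) = v (col q)" by (rule cols[OF q])
  show "u (col q + k) = v (col q + k)"
    using fiber_pair_sum[OF u q] fiber_pair_sum[OF v q] cols[OF q] assms(3) by simp
next
  show "u (4*k) = v (4*k)" using assms(3) by (simp add: level_def)
  show "u (Suc (4*k)) = v (Suc (4*k))" using fiber_last[OF u] fiber_last[OF v] assms(3) by simp
  show "u j = v j" if "4*k+2 \<le> j" for j using fiber_vanishes[OF u that] fiber_vanishes[OF v that] by simp
qed

definition col_dist :: "(nat \<Rightarrow> int) \<Rightarrow> (nat \<Rightarrow> int) \<Rightarrow> nat" where
  "col_dist u v = (\<Sum>q<2*k. nat \<bar>u (col q) - v (col q)\<bar>)"

lemma swap_towards: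
  assumes u: "u \<in> Fib" and v: "v \<in> Fib" and "level u = level v" and q: "q < 2*k" "u (col q) \<noteq> v (col q)"
  defines "\<sigma> \<equiv> if u (col q) < v (col q) then 1 else (-1::int)"
  shows "u + swap q \<sigma> \<in> Fib" "col_dist (u + swap q \<sigma>) v < col_dist u v"
proof -
  show "u + swap q \<sigma> \<in> Fib"
    by (rule add_swap_in_fiber[OF u q(1)])
      (use fiber_pair_sum[OF u q(1)] fiber_pair_sum[OF v q(1)] fiber_col_nonneg[OF u q(1)]
        fiber_col_nonneg[OF v q(1)] assms(3) q(2) in \<open>auto simp: \<sigma>_def\<close>)
  let ?d = "\<lambda>w r. nat \<bar>w (col r) - v (col r)\<bar>"
  have "q \<in> {..<2*k}" using q by simp
  then have split: "col_dist w v = ?d w q + (\<Sum>r\<in>{..<2*k} - {q}. ?d w r)" for w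
    unfolding col_dist_def by (rule sum.remove[OF finite_lessThan])
  have "(\<Sum>r\<in>{..<2*k} - {q}. ?d (u + swap q \<sigma>) r) = (\<Sum>r\<in>{..<2*k} - {q}. ?d u r)"
    by (rule sum.cong) (use q in auto)
  moreover have "?d (u + swap q \<sigma>) q < ?d u q" using q unfolding \<sigma>_def by auto
  ultimately show "col_dist (u + swap q \<sigma>) v < col_dist u v"
    unfolding split[of "u + swap q \<sigma>"] split[of u] by linarith
qed

lemma linked_top:
  assumes "u \<in> Fib" "v \<in> Fib" "level u = top_level" "level v = top_level"
  shows "linked u v"
  using assms
proof (induction "col_dist u v" arbitrary: u rule: less_induct)
  case less
  show ?case
  proof (cases "\<forall>q<2*k. u (col q) = v (col q)")
    case True
    then have "u = v" using fiber_eqI less.prems by simp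
    then show ?thesis by (simp add: edge_linked_refl)
  next
    case False
    then obtain q where q: "q < 2*k" "u (col q) \<noteq> v (col q)" by blast
    define \<sigma> where "\<sigma> = (if u (col q) < v (col q) then 1 else (-1::int))"
    note step = swap_towards[OF less.prems(1,2) _ q, folded \<sigma>_def]
    have "linked u (u + swap q \<sigma>)"
      using linked_top_swap less.prems step q(1) unfolding \<sigma>_def by simp
    moreover have "linked (u + swap q \<sigma>) v"
      using less.hyps less.prems step q(1) by simp
    ultimately show ?thesis by (rule edge_linked_trans)
  qed
qed

lemma linked_to_top:
  assumes v: "v \<in> Fib" "level v = top_level" and u: "u \<in> Fib"
  shows "linked u v"
proof -
  have "\<forall>u\<in>Fib. nat (top_level - level u) = m \<longrightarrow> linked u v" for m
  proof (induction m)
    case 0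
    show ?case
    proof (intro ballI impI)
      fix u assume "u \<in> Fib" "nat (top_level - level u) = 0"
      then have "level u = top_level" using level_le_top[of u] by simp
      then show "linked u v" using linked_top[OF \<open>u \<in> Fib\<close> v(1) _ v(2)] by simp
    qed
  next
    case (Suc m)
    show ?case
    proof (intro ballI impI)
      fix u assume u: "u \<in> Fib" "nat (top_level - level u) = Suc m"
      then have below: "level u < top_level" by simp
      have IH: "linked w v" if "w \<in> Fib" "level w = level u + 1" for w
      proof -
        have "nat (top_level - level w) = m" using that(2) u(2) by simp
        then show ?thesis using Suc.IH that(1) by blast
      qed
      show "linked u v"
      proof (cases "level u = bot_level")
        case True
        with below have "bot_level < top_level" by simp
        then show ?thesis by (rule linked_bottom[OF u(1) True _ IH])
      next
        case False
        with bot_le_level[OF u(1)] have "bot_level < level u" by simp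
        then show ?thesis by (rule linked_middle[OF u(1) _ below IH])
      qed
    qed
  qed
  then show ?thesis using u by blast
qed

theorem edge_connectivity_eq_min_degree: "edge_connectivity Fib Edg = mindeg"
proof (rule edge_connectivity_eq_min_degreeI[OF finite_fiber fiber_nonempty fiber_edges_doubleton])
  fix u w assume "u \<in> Fib" "w \<in> Fib"
  then have "linked u top_vertex" "linked w top_vertex"
    using linked_to_top[OF top_vertex_in_fiber level_top_vertex] by auto
  then show "linked u w" by (blast intro: edge_linked_trans edge_linked_sym)
qed

end

theorem theorem4:
  fixes k :: nat and b :: "nat \<Rightarrow> int"
  assumes "1 \<le> k"
    and "b \<in> Zvec (2*k+1)"
    and "fiber (Amat k) (2*k+1) (4*k+2) b \<noteq> {}"
  shows "edge_connectivity (fiber (Amat k) (2*k+1) (4*k+2) b)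
           (fiber_edges (Amat k) (2*k+1) (4*k+2) b (graver (Amat k) (2*k+1) (4*k+2)))
         = min_degree (fiber (Amat k) (2*k+1) (4*k+2) b)
           (fiber_edges (Amat k) (2*k+1) (4*k+2) b (graver (Amat k) (2*k+1) (4*k+2)))"
proof -
  interpret Amat_fiber k b by unfold_locales (fact assms(2,3))+
  show ?thesis by (rule edge_connectivity_eq_min_degree)
qed

end
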